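(* Let $Z>0$, let $\nu\mapsto\kappa_\nu,a_\nu$ be measurable with $0<\kappa_\nu\le\kappa_M$ and $0\le a_\nu<1$ for all $\nu>0$. Let $Q^\pm,R^\pm\in L^1((0,1)\times(0,\infty))$ satisfy $$0\le Q^\pm_\nu(\mu)\le R^\pm_\nu(\mu)\quad\text{for a.e. }(\mu,\nu)\in(0,1)\times(0,\infty).$$ Let $(I_\nu,T)$ and $(I'_\nu,T')$ be nonnegative solutions, with $I_\nu,I'_\nu\in L^1((0,Z)\times(-1,1)\times(0,\infty))$, of the problem $$(\mu\partial_\tau+\kappa_\nu)I_\nu(\tau,\mu)=\kappa_\nu a_\nu J_\nu(\tau)+\kappa_\nu(1-a_\nu)B_\nu(T(\tau)),\qquad T=T[J],$$ with boundary data $I_\nu(0,\mu)=Q^+_\nu(\mu)$, $I_\nu(Z,-\mu)=Q^-_\nu(\mu)$ ($0<\mu<1$), respectively with $R^\pm$ in place of $Q^\pm$ for $(I',T')$. Then $$I_\nu(\tau,\mu)\le I'_\nu(\tau,\mu)\ \text{ and }\ T(\tau)\le T'(\tau)\quad\text{for a.e. }(\tau,\mu,\nu)\in(0,Z)\times(-1,1)\times(0,\infty).$$ In particular, if $Q^\pm=R^\pm$ a.e., then $I_\nu=I'_\nu$ and $T=T'$ a.e. (uniqueness).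
   Context: Planck function: for $T>0$, $B_\nu(T)=\dfrac{2\hbar\nu^3}{c^2\,(e^{\hbar\nu/(kT)}-1)}$ with fixed positive constants $\hbar,c,k$, and $B_\nu(0)=0$; increasing in $T$. $J_\nu(\tau)=\tfrac12\int_{-1}^1I_\nu(\tau,\mu)d\mu$. $T[J](\tau)$ is the unique $T\ge0$ with $\int_0^\infty\kappa_\nu(1-a_\nu)B_\nu(T)d\nu=\int_0^\infty\kappa_\nu(1-a_\nu)J_\nu(\tau)d\nu$. Solutions are understood in the mild sense: for $\mu>0$, $I_\nu(\tau,\mu)=e^{-\kappa_\nu\tau/\mu}Q^+_\nu(\mu)+\int_0^\tau e^{-\kappa_\nu(\tau-t)/\mu}\frac{\kappa_\nu}\mu\big(a_\nu J_\nu(t)+(1-a_\nu)B_\nu(T(t))\big)dt$; for $\mu<0$, $I_\nu(\tau,\mu)=e^{-\kappa_\nu(Z-\tau)/|\mu|}Q^-_\nu(|\mu|)+\int_\tau^Z e^{-\kappa_\nu(t-\tau)/|\mu|}\frac{\kappa_\nu}{|\mu|}\big(a_\nu J_\nu(t)+(1-a_\nu)B_\nu(T(t))\big)dt$. *)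

theory Defs
  imports "HOL-Analysis.Analysis"
begin

text \<open>Planck function B_nu(T) with physical constants hb (reduced Planck), c (speed of light),
  kB (Boltzmann); B_nu(0) = 0 (and we also set it to 0 for T < 0, which never matters).\<close>
definition planck :: "real \<Rightarrow> real \<Rightarrow> real \<Rightarrow> real \<Rightarrow> real \<Rightarrow> real" where
  "planck hb c kB \<nu> T =
     (if T > 0 then 2 * hb * \<nu> ^ 3 / (c\<^sup>2 * (exp (hb * \<nu> / (kB * T)) - 1)) else 0)"

definition Jmean :: "(real \<Rightarrow> real \<Rightarrow> real \<Rightarrow> real) \<Rightarrow> real \<Rightarrow> real \<Rightarrow> real" where
  "Jmean I \<nu> \<tau> = (1/2) * (LINT \<mu>:{-1<..<1}|lborel. I \<tau> \<mu> \<nu>)"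

text \<open>T = T[J] at depth tau: T tau >= 0 and the radiative equilibrium identity
  int_0^infty kappa (1-a) B_nu(T) dnu = int_0^infty kappa (1-a) J_nu dnu
  (nonnegative integrals, taken in ennreal).\<close>
definition temp_eq ::
  "real \<Rightarrow> real \<Rightarrow> real \<Rightarrow> (real \<Rightarrow> real) \<Rightarrow> (real \<Rightarrow> real)
   \<Rightarrow> (real \<Rightarrow> real \<Rightarrow> real \<Rightarrow> real) \<Rightarrow> real \<Rightarrow> real \<Rightarrow> bool" where
  "temp_eq hb c kB \<kappa> a I \<tau> Tt \<longleftrightarrow>
     Tt \<ge> 0 \<and>
     (\<integral>\<^sup>+ \<nu>. ennreal (\<kappa> \<nu> * (1 - a \<nu>) * planck hb c kB \<nu> Tt) * indicator {0<..} \<nu> \<partial>lborel)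
   = (\<integral>\<^sup>+ \<nu>. ennreal (\<kappa> \<nu> * (1 - a \<nu>) * Jmean I \<nu> \<tau>) * indicator {0<..} \<nu> \<partial>lborel)"

definition src ::
  "real \<Rightarrow> real \<Rightarrow> real \<Rightarrow> (real \<Rightarrow> real) \<Rightarrow> (real \<Rightarrow> real \<Rightarrow> real \<Rightarrow> real)
   \<Rightarrow> (real \<Rightarrow> real) \<Rightarrow> real \<Rightarrow> real \<Rightarrow> real" where
  "src hb c kB a I T \<nu> t = a \<nu> * Jmean I \<nu> t + (1 - a \<nu>) * planck hb c kB \<nu> (T t)"

text \<open>(I, T) is a nonnegative mild solution, with I in L^1((0,Z) x (-1,1) x (0,infty)),
  of the radiative transfer problem with boundary data Qp (incoming at tau = 0) and
  Qm (incoming at tau = Z); boundary data written Q mu nu = Q_nu(mu).\<close>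
definition rte_solution ::
  "real \<Rightarrow> real \<Rightarrow> real \<Rightarrow> real \<Rightarrow> (real \<Rightarrow> real) \<Rightarrow> (real \<Rightarrow> real)
   \<Rightarrow> (real \<Rightarrow> real \<Rightarrow> real) \<Rightarrow> (real \<Rightarrow> real \<Rightarrow> real)
   \<Rightarrow> (real \<Rightarrow> real \<Rightarrow> real \<Rightarrow> real) \<Rightarrow> (real \<Rightarrow> real) \<Rightarrow> bool" where
  "rte_solution hb c kB Z \<kappa> a Qp Qm I T \<longleftrightarrow>
     set_integrable (lborel \<Otimes>\<^sub>M (lborel \<Otimes>\<^sub>M lborel))
        ({0<..<Z} \<times> ({-1<..<1} \<times> {0<..})) (\<lambda>(\<tau>, \<mu>, \<nu>). I \<tau> \<mu> \<nu>)
   \<and> T \<in> borel_measurable lborel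
   \<and> (AE x in lborel \<Otimes>\<^sub>M (lborel \<Otimes>\<^sub>M lborel).
        x \<in> {0<..<Z} \<times> ({-1<..<1} \<times> {0<..}) \<longrightarrow> I (fst x) (fst (snd x)) (snd (snd x)) \<ge> 0)
   \<and> (AE \<tau> in lborel. \<tau> \<in> {0<..<Z} \<longrightarrow> temp_eq hb c kB \<kappa> a I \<tau> (T \<tau>))
   \<and> (AE x in lborel \<Otimes>\<^sub>M (lborel \<Otimes>\<^sub>M lborel).
        let \<tau> = fst x; \<mu> = fst (snd x); \<nu> = snd (snd x) in
        (\<tau> \<in> {0<..<Z} \<and> \<mu> \<in> {0<..<1} \<and> \<nu> > 0 \<longrightarrow>
           ennreal (I \<tau> \<mu> \<nu>) =
             ennreal (exp (- \<kappa> \<nu> * \<tau> / \<mu>) * Qp \<mu> \<nu>)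
           + (\<integral>\<^sup>+ t. ennreal (exp (- \<kappa> \<nu> * (\<tau> - t) / \<mu>) * (\<kappa> \<nu> / \<mu>)
                          * src hb c kB a I T \<nu> t) * indicator {0..\<tau>} t \<partial>lborel))
      \<and> (\<tau> \<in> {0<..<Z} \<and> \<mu> \<in> {-1<..<0} \<and> \<nu> > 0 \<longrightarrow>
           ennreal (I \<tau> \<mu> \<nu>) =
             ennreal (exp (- \<kappa> \<nu> * (Z - \<tau>) / \<bar>\<mu>\<bar>) * Qm \<bar>\<mu>\<bar> \<nu>)
           + (\<integral>\<^sup>+ t. ennreal (exp (- \<kappa> \<nu> * (t - \<tau>) / \<bar>\<mu>\<bar>) * (\<kappa> \<nu> / \<bar>\<mu>\<bar>)
                          * src hb c kB a I T \<nu> t) * indicator {\<tau>..Z} t \<partial>lborel)))"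

end

theory Submission
  imports Defs
begin

text \<open>
  The difference of two solutions is controlled in \<open>L\<^sup>1\<close> through its positive part.
  Along each ray the mild formula bounds \<open>(I - I')\<^sup>+\<close> by the transported positive part
  \<open>g = (S - S')\<^sup>+\<close> of the source excess; integrating over all rays, a fraction of the emission
  \<open>\<kappa> g\<close> escapes through the boundary \<open>\<tau> = Z\<close>, so the total weighted intensity excess is at
  most the total emission excess minus an escape term, which is positive unless \<open>g = 0\<close>.  Conversely the
  radiative equilibrium condition and the monotonicity of the Planck function give that the
  emission excess at each depth is at most the absorbed intensity excess.  Since all these
  quantities are finite, the escape term vanishes, hence \<open>g = 0\<close>, hence \<open>(I - I')\<^sup>+ = 0\<close> a.e.;
  feeding \<open>J \<le> J'\<close> back into the equilibrium condition gives \<open>T \<le> T'\<close>.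
  Uniqueness follows by exchanging the roles of the two solutions.
\<close>

section \<open>The Planck function\<close>

lemma planck_nonneg:
  assumes "hb > 0" "c > 0" "kB > 0" "\<nu> > 0"
  shows "0 \<le> planck hb c kB \<nu> T"
proof (cases "T > 0")
  case True
  have "hb * \<nu> / (kB * T) > 0" using assms True by simp
  hence "exp (hb * \<nu> / (kB * T)) > 1" by simp
  thus ?thesis using assms True unfolding planck_def by simp
qed (simp add: planck_def)

lemma planck_strict_mono:
  assumes "hb > 0" "c > 0" "kB > 0" "\<nu> > 0" "T1 < T2" "T2 > 0"
  shows "planck hb c kB \<nu> T1 < planck hb c kB \<nu> T2"
proof (cases "T1 > 0")
  case True
  have "hb * \<nu> / (kB * T2) < hb * \<nu> / (kB * T1)"
    using assms True by (intro divide_strict_left_mono) (auto intro: mult_strict_left_mono)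
  hence e: "exp (hb * \<nu> / (kB * T2)) < exp (hb * \<nu> / (kB * T1))" by simp
  have "hb * \<nu> / (kB * T2) > 0" using assms by simp
  hence "exp (hb * \<nu> / (kB * T2)) > 1" by simp
  hence d: "0 < c\<^sup>2 * (exp (hb * \<nu> / (kB * T2)) - 1)" using assms by simp
  have "c\<^sup>2 * (exp (hb * \<nu> / (kB * T2)) - 1) < c\<^sup>2 * (exp (hb * \<nu> / (kB * T1)) - 1)"
    using e assms by simp
  moreover have "0 < 2 * hb * \<nu> ^ 3" using assms by simp
  ultimately have "2 * hb * \<nu> ^ 3 / (c\<^sup>2 * (exp (hb * \<nu> / (kB * T1)) - 1))
      < 2 * hb * \<nu> ^ 3 / (c\<^sup>2 * (exp (hb * \<nu> / (kB * T2)) - 1))"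
    using d by (intro divide_strict_left_mono) auto
  thus ?thesis using True assms unfolding planck_def by simp
next
  case False
  have "hb * \<nu> / (kB * T2) > 0" using assms by simp
  hence "exp (hb * \<nu> / (kB * T2)) > 1" by simp
  thus ?thesis using assms False unfolding planck_def by simp
qed

lemma planck_mono:
  assumes "hb > 0" "c > 0" "kB > 0" "\<nu> > 0" "T1 \<le> T2"
  shows "planck hb c kB \<nu> T1 \<le> planck hb c kB \<nu> T2"
proof (cases "T1 < T2 \<and> T2 > 0")
  case True thus ?thesis using planck_strict_mono[OF assms(1-4)] by (simp add: less_imp_le)
next
  case False thus ?thesis using assms by (auto simp: planck_def)
qed

lemma measurable_planck[measurable]:
  "(\<lambda>(\<nu>, T). planck hb c kB \<nu> T) \<in> borel_measurable (borel \<Otimes>\<^sub>M borel)"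
  unfolding planck_def by measurable

lemma measurable_planck_compose[measurable (raw)]:
  assumes "f \<in> borel_measurable M" "h \<in> borel_measurable M"
  shows "(\<lambda>x. planck hb c kB (f x) (h x)) \<in> borel_measurable M"
  using measurable_compose[OF measurable_Pair[OF assms[unfolded measurable_lborel2]] measurable_planck]
  by (simp add: measurable_lborel2)

lemma ennreal_le_add_diff: "ennreal x \<le> ennreal y + ennreal (x - y)"
proof (cases "y \<ge> 0")
  case True
  then show ?thesis
    by (cases "x \<ge> y")
      (auto simp flip: ennreal_plus intro: ennreal_leI order_trans[OF ennreal_leI[of x y]])
next
  case False
  then show ?thesis
    by (cases "x \<ge> 0") (auto intro!: ennreal_leI simp: ennreal_neg)
qed

lemma ennreal_add_le: "ennreal (x + y) \<le> ennreal x + ennreal y"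
  using ennreal_le_add_diff[of "x + y" x] by simp

lemma ennreal_diff_le_of_le_add:
  assumes "0 \<le> y" "ennreal x \<le> ennreal y + L"
  shows "ennreal (x - y) \<le> L"
proof (cases "x \<le> y")
  case True thus ?thesis by (simp add: ennreal_neg)
next
  case False
  hence "ennreal x = ennreal y + ennreal (x - y)" using assms by (simp flip: ennreal_plus)
  with assms have "ennreal y + ennreal (x - y) \<le> ennreal y + L" by simp
  thus ?thesis by (simp add: ennreal_add_left_cancel_le)
qed

lemma ennreal_integral_le_nn_integral:
  fixes f :: "'a \<Rightarrow> real"
  assumes "integrable M f"
  shows "ennreal (integral\<^sup>L M f) \<le> (\<integral>\<^sup>+ x. ennreal (f x) \<partial>M)"
proof -
  have i: "integrable M (\<lambda>x. max (f x) 0)" using assms by auto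
  have "integral\<^sup>L M f \<le> integral\<^sup>L M (\<lambda>x. max (f x) 0)"
    using assms i by (intro integral_mono) auto
  hence "ennreal (integral\<^sup>L M f) \<le> ennreal (integral\<^sup>L M (\<lambda>x. max (f x) 0))" by (rule ennreal_leI)
  also have "\<dots> = (\<integral>\<^sup>+ x. ennreal (max (f x) 0) \<partial>M)"
    using i by (subst nn_integral_eq_integral) auto
  also have "\<dots> = (\<integral>\<^sup>+ x. ennreal (f x) \<partial>M)"
    by (intro nn_integral_cong) (auto simp: max_def ennreal_neg)
  finally show ?thesis .
qed

lemma AE_pair_fstI:
  assumes "sigma_finite_measure M" and "AE x in N. P x"
  shows "AE y in N \<Otimes>\<^sub>M M. P (fst y)"
proof -
  obtain A where A: "A \<in> sets N" "emeasure N A = 0" "{x\<in>space N. \<not> P x} \<subseteq> A"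
    using AE_E[OF assms(2)] by metis
  show ?thesis
  proof (rule AE_I[where N="A \<times> space M"])
    show "{x \<in> space (N \<Otimes>\<^sub>M M). \<not> P (fst x)} \<subseteq> A \<times> space M"
      using A by (auto simp: space_pair_measure)
    have "emeasure (N \<Otimes>\<^sub>M M) (A \<times> space M) = emeasure N A * emeasure M (space M)"
      using sigma_finite_measure.emeasure_pair_measure_Times[OF assms(1), of A N "space M"] A
      by simp
    thus "emeasure (N \<Otimes>\<^sub>M M) (A \<times> space M) = 0" using A by simp
    show "A \<times> space M \<in> sets (N \<Otimes>\<^sub>M M)" using A by (simp add: pair_measureI)
  qed
qed

lemma AE_pair_sndI:
  assumes "sigma_finite_measure M" and "AE x in M. P x"
  shows "AE y in N \<Otimes>\<^sub>M M. P (snd y)"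
proof -
  obtain A where A: "A \<in> sets M" "emeasure M A = 0" "{x\<in>space M. \<not> P x} \<subseteq> A"
    using AE_E[OF assms(2)] by metis
  show ?thesis
  proof (rule AE_I[where N="space N \<times> A"])
    show "{x \<in> space (N \<Otimes>\<^sub>M M). \<not> P (snd x)} \<subseteq> space N \<times> A"
      using A by (auto simp: space_pair_measure)
    have "emeasure (N \<Otimes>\<^sub>M M) (space N \<times> A) = emeasure N (space N) * emeasure M A"
      using sigma_finite_measure.emeasure_pair_measure_Times[OF assms(1), of "space N" N A] A
      by simp
    thus "emeasure (N \<Otimes>\<^sub>M M) (space N \<times> A) = 0" using A by simp
    show "space N \<times> A \<in> sets (N \<Otimes>\<^sub>M M)" using A by (simp add: pair_measureI)
  qed
qed

abbreviation "lborel2 \<equiv> (lborel \<Otimes>\<^sub>M lborel :: (real \<times> real) measure)"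
abbreviation "lborel3 \<equiv> (lborel \<Otimes>\<^sub>M (lborel \<Otimes>\<^sub>M lborel) :: (real \<times> real \<times> real) measure)"

lemma sigma_finite_lborel2: "sigma_finite_measure lborel2"
  by (intro sigma_finite_pair_measure sigma_finite_lborel)

lemma distr_lborel2_reflect_fst: "distr lborel2 lborel2 (\<lambda>(x, y). (- x, y)) = lborel2"
proof -
  have "distr lborel borel uminus \<Otimes>\<^sub>M distr lborel borel (\<lambda>x::real. x)
       = distr lborel2 (borel \<Otimes>\<^sub>M borel) (\<lambda>(x, y). (- x, y))"
    by (intro pair_measure_distr) (auto simp: distr_id2 sigma_finite_lborel)
  hence "lborel2 = distr lborel2 (borel \<Otimes>\<^sub>M borel) (\<lambda>(x, y). (- x, y))"
    by (simp add: lborel_distr_uminus distr_id2)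
  also have "\<dots> = distr lborel2 lborel2 (\<lambda>(x, y). (- x, y))"
    by (intro distr_cong sets_pair_measure_cong) auto
  finally show ?thesis by simp
qed

lemma AE_lborel2_reflect_fst:
  assumes "AE y in lborel2. P y"
  shows "AE y in lborel2. P (- fst y, snd y)"
proof -
  have m: "(\<lambda>(x, y). (- x, y)) \<in> measurable lborel2 lborel2" by measurable
  obtain N where N: "N \<in> sets lborel2" "emeasure lborel2 N = 0" "{x\<in>space lborel2. \<not> P x} \<subseteq> N"
    using AE_E[OF assms] by metis
  let ?N = "(\<lambda>(x, y). (- x, y)) -` N \<inter> space lborel2"
  show ?thesis
  proof (rule AE_I[where N="?N"])
    show "?N \<in> sets lborel2" using measurable_sets[OF m N(1)] .
    have "emeasure lborel2 ?N = emeasure (distr lborel2 lborel2 (\<lambda>(x, y). (- x, y))) N"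
      using m N by (simp add: emeasure_distr)
    thus "emeasure lborel2 ?N = 0" using N by (simp add: distr_lborel2_reflect_fst)
    show "{x \<in> space lborel2. \<not> P (- fst x, snd x)} \<subseteq> ?N" using N by (auto simp: space_pair_measure)
  qed
qed

lemma nn_integral_lborel3:
  fixes f :: "real \<times> real \<times> real \<Rightarrow> ennreal"
  assumes [measurable]: "f \<in> borel_measurable lborel3"
  shows "integral\<^sup>N lborel3 f = (\<integral>\<^sup>+\<tau>. \<integral>\<^sup>+\<nu>. \<integral>\<^sup>+\<mu>. f (\<tau>, \<mu>, \<nu>) \<partial>lborel \<partial>lborel \<partial>lborel)"
proof -
  have "integral\<^sup>N lborel3 f = (\<integral>\<^sup>+\<tau>. \<integral>\<^sup>+y. f (\<tau>, y) \<partial>lborel2 \<partial>lborel)"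
    using sigma_finite_measure.nn_integral_fst[OF sigma_finite_lborel2, of f lborel] by simp
  also have "\<dots> = (\<integral>\<^sup>+\<tau>. \<integral>\<^sup>+\<nu>. \<integral>\<^sup>+\<mu>. f (\<tau>, \<mu>, \<nu>) \<partial>lborel \<partial>lborel \<partial>lborel)"
    by (intro nn_integral_cong lborel_pair.nn_integral_snd[symmetric]) simp
  finally show ?thesis .
qed

lemma measurable_Pair3:
  assumes "f \<in> borel_measurable M" "g \<in> borel_measurable M" "h \<in> borel_measurable M"
  shows "(\<lambda>x. (f x, g x, h x)) \<in> M \<rightarrow>\<^sub>M lborel3"
  using assms by (auto intro!: measurable_Pair simp: measurable_lborel2)

section \<open>The transport kernel\<close>

lemma nn_integral_exp_decay_upper:
  assumes k: "k > 0" and m: "m > 0" and tz: "t \<le> Z"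
  shows "(\<integral>\<^sup>+\<tau>. ennreal (exp (- k * (\<tau> - t) / m) * (k / m)) * indicator {t..Z} \<tau> \<partial>lborel)
      = ennreal (1 - exp (- k * (Z - t) / m))"
proof -
  have "(\<integral>\<^sup>+\<tau>. ennreal (exp (- k * (\<tau> - t) / m) * (k / m)) * indicator {t..Z} \<tau> \<partial>lborel)
     = ennreal ((\<lambda>\<tau>. - exp (- k * (\<tau> - t) / m)) Z - (\<lambda>\<tau>. - exp (- k * (\<tau> - t) / m)) t)"
  proof (rule nn_integral_FTC_Icc)
    fix x
    show "((\<lambda>\<tau>. - exp (- k * (\<tau> - t) / m)) has_real_derivative exp (- k * (x - t) / m) * (k / m)) (at x)"
      using m by (auto intro!: derivative_eq_intros simp: field_simps)
    show "0 \<le> exp (- k * (x - t) / m) * (k / m)" using k m by simp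
  qed (use tz in auto)
  thus ?thesis by simp
qed

lemma nn_integral_exp_decay_lower:
  assumes k: "k > 0" and m: "m > 0" and tz: "0 \<le> t"
  shows "(\<integral>\<^sup>+\<tau>. ennreal (exp (- k * (t - \<tau>) / m) * (k / m)) * indicator {0..t} \<tau> \<partial>lborel)
      = ennreal (1 - exp (- k * t / m))"
proof -
  have "(\<integral>\<^sup>+\<tau>. ennreal (exp (- k * (t - \<tau>) / m) * (k / m)) * indicator {0..t} \<tau> \<partial>lborel)
     = ennreal ((\<lambda>\<tau>. exp (- k * (t - \<tau>) / m)) t - (\<lambda>\<tau>. exp (- k * (t - \<tau>) / m)) 0)"
  proof (rule nn_integral_FTC_Icc)
    fix x
    show "((\<lambda>\<tau>. exp (- k * (t - \<tau>) / m)) has_real_derivative exp (- k * (t - x) / m) * (k / m)) (at x)"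
      using m by (auto intro!: derivative_eq_intros simp: field_simps)
    show "0 \<le> exp (- k * (t - x) / m) * (k / m)" using k m by simp
  qed (use tz in auto)
  thus ?thesis by simp
qed

text \<open>The weight of the source at depth \<open>t\<close> in the mild formula for the intensity at
  \<open>(\<tau>, \<mu>)\<close>; the endpoints \<open>t = 0\<close> and \<open>t = Z\<close> omitted here are null sets.\<close>
definition transport_kernel :: "real \<Rightarrow> real \<Rightarrow> real \<Rightarrow> real \<Rightarrow> real \<Rightarrow> ennreal" where
  "transport_kernel Z k \<tau> \<mu> t =
     (if 0 < \<mu> \<and> 0 < t \<and> t \<le> \<tau> then ennreal (exp (- k * (\<tau> - t) / \<mu>) * (k / \<mu>))
      else if \<mu> < 0 \<and> \<tau> \<le> t \<and> t < Z then ennreal (exp (- k * (t - \<tau>) / \<bar>\<mu>\<bar>) * (k / \<bar>\<mu>\<bar>))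
      else 0)"

lemma measurable_transport_kernel[measurable (raw)]:
  assumes [measurable]: "k \<in> borel_measurable M" "\<tau> \<in> borel_measurable M"
    "\<mu> \<in> borel_measurable M" "t \<in> borel_measurable M"
  shows "(\<lambda>x. transport_kernel Z (k x) (\<tau> x) (\<mu> x) (t x)) \<in> borel_measurable M"
  unfolding transport_kernel_def by measurable

text \<open>The part of the emission at depth \<open>t\<close> that forward rays carry out through \<open>\<tau> = Z\<close>.\<close>
definition escape_rate :: "real \<Rightarrow> real \<Rightarrow> real \<Rightarrow> ennreal" where
  "escape_rate Z k t =
     ennreal (k / 2) * (\<integral>\<^sup>+\<mu>. ennreal (exp (- k * (Z - t) / \<mu>)) * indicator {0<..<1} \<mu> \<partial>lborel)"

lemma measurable_escape_rate[measurable (raw)]: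
  assumes [measurable]: "f \<in> borel_measurable M" "h \<in> borel_measurable M"
  shows "(\<lambda>x. escape_rate Z (f x) (h x)) \<in> borel_measurable M"
  unfolding escape_rate_def by measurable

lemma transport_kernel_depth_integral_le:
  assumes k: "k > 0" and t: "0 < t" "t < Z" and \<mu>: "-1 < \<mu>" "\<mu> < 1"
  shows "(\<integral>\<^sup>+\<tau>. transport_kernel Z k \<tau> \<mu> t * indicator {0<..<Z} \<tau> \<partial>lborel)
         + ennreal (exp (- k * (Z - t) / \<mu>)) * indicator {0<..<1} \<mu> \<le> 1"
proof -
  consider "0 < \<mu>" | "\<mu> < 0" | "\<mu> = 0" by linarith
  then show ?thesis
  proof cases
    case 1
    let ?e = "exp (- k * (Z - t) / \<mu>)"
    have "(\<integral>\<^sup>+\<tau>. transport_kernel Z k \<tau> \<mu> t * indicator {0<..<Z} \<tau> \<partial>lborel)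
       \<le> (\<integral>\<^sup>+\<tau>. ennreal (exp (- k * (\<tau> - t) / \<mu>) * (k / \<mu>)) * indicator {t..Z} \<tau> \<partial>lborel)"
      using 1 t by (intro nn_integral_mono) (auto simp: transport_kernel_def indicator_def)
    also have "\<dots> = ennreal (1 - ?e)"
      using nn_integral_exp_decay_upper[OF k 1, of t Z] t by simp
    finally have "(\<integral>\<^sup>+\<tau>. transport_kernel Z k \<tau> \<mu> t * indicator {0<..<Z} \<tau> \<partial>lborel) + ennreal ?e
        \<le> ennreal (1 - ?e) + ennreal ?e"
      by (rule add_right_mono)
    also have "\<dots> = 1"
      using 1 k t by (simp flip: ennreal_plus add: divide_nonneg_pos)
    finally show ?thesis using 1 \<mu> by simp
  next
    case 2
    have "(\<integral>\<^sup>+\<tau>. transport_kernel Z k \<tau> \<mu> t * indicator {0<..<Z} \<tau> \<partial>lborel)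
       \<le> (\<integral>\<^sup>+\<tau>. ennreal (exp (- k * (t - \<tau>) / \<bar>\<mu>\<bar>) * (k / \<bar>\<mu>\<bar>)) * indicator {0..t} \<tau> \<partial>lborel)"
      using 2 t by (intro nn_integral_mono) (auto simp: transport_kernel_def indicator_def)
    also have "\<dots> = ennreal (1 - exp (- k * t / \<bar>\<mu>\<bar>))"
      using nn_integral_exp_decay_lower[OF k, of "\<bar>\<mu>\<bar>" t] 2 t by simp
    also have "\<dots> \<le> 1" by (simp add: ennreal_le_1)
    finally show ?thesis using 2 by simp
  next
    case 3
    thus ?thesis by (simp add: transport_kernel_def)
  qed
qed

definition transport_mass :: "real \<Rightarrow> real \<Rightarrow> real \<Rightarrow> ennreal" where
  "transport_mass Z k t =
     (\<integral>\<^sup>+\<tau>. \<integral>\<^sup>+\<mu>. ennreal (k / 2) * transport_kernel Z k \<tau> \<mu> t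
        * indicator {0<..<Z} \<tau> * indicator {-1<..<1} \<mu> \<partial>lborel \<partial>lborel)"

lemma measurable_transport_mass[measurable]: "transport_mass Z k \<in> borel_measurable borel"
  unfolding transport_mass_def by measurable

lemma transport_mass_escape_le:
  assumes k: "k > 0" and t: "0 < t" "t < Z"
  shows "transport_mass Z k t + escape_rate Z k t \<le> ennreal k"
proof -
  let ?K = "\<lambda>\<mu>. \<integral>\<^sup>+\<tau>. transport_kernel Z k \<tau> \<mu> t * indicator {0<..<Z} \<tau> \<partial>lborel"
  let ?e = "\<lambda>\<mu>. ennreal (exp (- k * (Z - t) / \<mu>)) * indicator {0<..<1} \<mu>"
  have "transport_mass Z k t
     = (\<integral>\<^sup>+\<mu>. \<integral>\<^sup>+\<tau>. ennreal (k / 2) * indicator {-1<..<1} \<mu>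
            * (transport_kernel Z k \<tau> \<mu> t * indicator {0<..<Z} \<tau>) \<partial>lborel \<partial>lborel)"
    unfolding transport_mass_def by (subst lborel_pair.Fubini') (simp_all add: ac_simps)
  also have "\<dots> = (\<integral>\<^sup>+\<mu>. ennreal (k / 2) * indicator {-1<..<1} \<mu> * ?K \<mu> \<partial>lborel)"
    by (intro nn_integral_cong nn_integral_cmult) simp
  finally have mass: "transport_mass Z k t
     = (\<integral>\<^sup>+\<mu>. ennreal (k / 2) * indicator {-1<..<1} \<mu> * ?K \<mu> \<partial>lborel)" .
  have escape: "escape_rate Z k t = (\<integral>\<^sup>+\<mu>. ennreal (k / 2) * indicator {-1<..<1} \<mu> * ?e \<mu> \<partial>lborel)"
    unfolding escape_rate_def
    by (subst nn_integral_cmult[symmetric]) (auto intro!: nn_integral_cong simp: indicator_def)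
  have "(\<integral>\<^sup>+\<mu>. ennreal (k / 2) * indicator {-1<..<1} \<mu> * ?K \<mu> \<partial>lborel)
        + (\<integral>\<^sup>+\<mu>. ennreal (k / 2) * indicator {-1<..<1} \<mu> * ?e \<mu> \<partial>lborel)
     = (\<integral>\<^sup>+\<mu>. ennreal (k / 2) * indicator {-1<..<1} \<mu> * (?K \<mu> + ?e \<mu>) \<partial>lborel)"
    by (subst nn_integral_add[symmetric]) (simp_all add: distrib_left)
  also have "\<dots> \<le> (\<integral>\<^sup>+(\<mu>::real). ennreal (k / 2) * indicator {-1<..<1} \<mu> \<partial>lborel)"
  proof (intro nn_integral_mono)
    fix \<mu> :: real
    show "ennreal (k / 2) * indicator {-1<..<1} \<mu> * (?K \<mu> + ?e \<mu>) \<le> ennreal (k / 2) * indicator {-1<..<1} \<mu>"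
    proof (cases "-1 < \<mu> \<and> \<mu> < 1")
      case True
      with transport_kernel_depth_integral_le[OF k t] have "?K \<mu> + ?e \<mu> \<le> 1" by simp
      from mult_left_mono[OF this, of "ennreal (k / 2)"] True show ?thesis by simp
    qed simp
  qed
  also have "\<dots> = ennreal (k / 2) * ennreal 2"
    by (simp add: nn_integral_cmult_indicator)
  also have "\<dots> = ennreal k"
    using k by (subst ennreal_mult[symmetric]) auto
  finally show ?thesis unfolding mass escape .
qed

lemma escape_rate_pos:
  assumes k: "k > 0" and t: "t < Z"
  shows "escape_rate Z k t \<noteq> 0"
proof -
  let ?c = "exp (- 2 * k * (Z - t))"
  have "(\<integral>\<^sup>+(\<mu>::real). ennreal ?c * indicator {1/2<..<1} \<mu> \<partial>lborel)
     \<le> (\<integral>\<^sup>+\<mu>. ennreal (exp (- k * (Z - t) / \<mu>)) * indicator {0<..<1} \<mu> \<partial>lborel)"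
  proof (intro nn_integral_mono)
    fix \<mu> :: real
    show "ennreal ?c * indicator {1/2<..<1} \<mu> \<le> ennreal (exp (- k * (Z - t) / \<mu>)) * indicator {0<..<1} \<mu>"
    proof (cases "1/2 < \<mu> \<and> \<mu> < 1")
      case True
      have "k * (Z - t) / \<mu> \<le> k * (Z - t) / (1/2)"
        using True k t by (intro divide_left_mono) auto
      hence "?c \<le> exp (- k * (Z - t) / \<mu>)" by simp
      thus ?thesis using True by (simp add: ennreal_leI)
    qed auto
  qed
  moreover have "(\<integral>\<^sup>+(\<mu>::real). ennreal ?c * indicator {1/2<..<1} \<mu> \<partial>lborel) = ennreal ?c * ennreal (1/2)"
    by (simp add: nn_integral_cmult_indicator)
  moreover have "ennreal ?c * ennreal (1/2) > 0" by (subst ennreal_mult[symmetric]) auto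
  ultimately have "(\<integral>\<^sup>+\<mu>. ennreal (exp (- k * (Z - t) / \<mu>)) * indicator {0<..<1} \<mu> \<partial>lborel) > 0"
    by auto
  thus ?thesis unfolding escape_rate_def using k by simp
qed

lemma nn_integral_transport_kernel_swap:
  assumes g[measurable]: "g \<in> borel_measurable borel"
  shows "(\<integral>\<^sup>+\<tau>. \<integral>\<^sup>+\<mu>. ennreal (k / 2) * (\<integral>\<^sup>+t. transport_kernel Z k \<tau> \<mu> t * g t \<partial>lborel)
            * indicator {0<..<Z} \<tau> * indicator {-1<..<1} \<mu> \<partial>lborel \<partial>lborel)
       = (\<integral>\<^sup>+t. g t * indicator {0<..<Z} t * transport_mass Z k t \<partial>lborel)"
proof -
  let ?F = "\<lambda>\<tau> \<mu> t. ennreal (k / 2) * transport_kernel Z k \<tau> \<mu> t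
              * indicator {0<..<Z} \<tau> * indicator {-1<..<1} \<mu>"
  have F_outside: "?F \<tau> \<mu> t = 0" if "t \<notin> {0<..<Z}" for \<tau> \<mu> t
    using that by (auto simp: transport_kernel_def indicator_def)
  have "(\<integral>\<^sup>+\<tau>. \<integral>\<^sup>+\<mu>. ennreal (k / 2) * (\<integral>\<^sup>+t. transport_kernel Z k \<tau> \<mu> t * g t \<partial>lborel)
            * indicator {0<..<Z} \<tau> * indicator {-1<..<1} \<mu> \<partial>lborel \<partial>lborel)
     = (\<integral>\<^sup>+\<tau>. \<integral>\<^sup>+\<mu>. \<integral>\<^sup>+t. ?F \<tau> \<mu> t * g t \<partial>lborel \<partial>lborel \<partial>lborel)"
    by (intro nn_integral_cong)
      (simp add: nn_integral_cmult nn_integral_multc flip: nn_integral_cmult nn_integral_multc;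
       simp add: ac_simps)
  also have "\<dots> = (\<integral>\<^sup>+t. \<integral>\<^sup>+\<tau>. \<integral>\<^sup>+\<mu>. ?F \<tau> \<mu> t * g t \<partial>lborel \<partial>lborel \<partial>lborel)"
    by (subst lborel_pair.Fubini', measurable)
      (intro nn_integral_cong lborel_pair.Fubini', measurable)
  also have "\<dots> = (\<integral>\<^sup>+t. g t * indicator {0<..<Z} t * transport_mass Z k t \<partial>lborel)"
  proof (intro nn_integral_cong)
    fix t :: real
    show "(\<integral>\<^sup>+\<tau>. \<integral>\<^sup>+\<mu>. ?F \<tau> \<mu> t * g t \<partial>lborel \<partial>lborel) = g t * indicator {0<..<Z} t * transport_mass Z k t"
    proof (cases "t \<in> {0<..<Z}")
      case True
      have "g t * transport_mass Z k t = (\<integral>\<^sup>+\<tau>. \<integral>\<^sup>+\<mu>. g t * ?F \<tau> \<mu> t \<partial>lborel \<partial>lborel)"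
        unfolding transport_mass_def
        by (subst nn_integral_cmult[symmetric], measurable)
          (intro nn_integral_cong nn_integral_cmult[symmetric], measurable)
      thus ?thesis using True by (simp add: ac_simps)
    qed (simp add: F_outside)
  qed
  finally show ?thesis .
qed

lemma transport_balance:
  assumes k: "k > 0" and g[measurable]: "g \<in> borel_measurable borel"
  shows "(\<integral>\<^sup>+\<tau>. \<integral>\<^sup>+\<mu>. ennreal (k / 2) * (\<integral>\<^sup>+t. transport_kernel Z k \<tau> \<mu> t * g t \<partial>lborel)
            * indicator {0<..<Z} \<tau> * indicator {-1<..<1} \<mu> \<partial>lborel \<partial>lborel)
       + (\<integral>\<^sup>+\<tau>. g \<tau> * indicator {0<..<Z} \<tau> * escape_rate Z k \<tau> \<partial>lborel)
       \<le> (\<integral>\<^sup>+\<tau>. ennreal k * g \<tau> * indicator {0<..<Z} \<tau> \<partial>lborel)"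
proof -
  have "(\<integral>\<^sup>+t. g t * indicator {0<..<Z} t * transport_mass Z k t \<partial>lborel)
        + (\<integral>\<^sup>+t. g t * indicator {0<..<Z} t * escape_rate Z k t \<partial>lborel)
     = (\<integral>\<^sup>+t. g t * indicator {0<..<Z} t * (transport_mass Z k t + escape_rate Z k t) \<partial>lborel)"
    by (subst nn_integral_add[symmetric]) (auto simp: distrib_left)
  also have "\<dots> \<le> (\<integral>\<^sup>+t. g t * indicator {0<..<Z} t * ennreal k \<partial>lborel)"
    using transport_mass_escape_le[OF k]
    by (intro nn_integral_mono) (auto intro!: mult_left_mono simp: indicator_def)
  finally show ?thesis
    unfolding nn_integral_transport_kernel_swap[OF g] by (simp add: ac_simps)
qed

section \<open>Comparison of two solutions\<close>

lemma ennreal_norm_integral_le: "ennreal (norm (integral\<^sup>L M f)) \<le> (\<integral>\<^sup>+x. norm (f x) \<partial>M)"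
  by (cases "integrable M f") (simp_all add: integral_norm_bound_ennreal not_integrable_integral_eq)

lemma ennreal_mult_add:
  assumes "0 \<le> p" "0 \<le> q"
  shows "ennreal (p * d) + ennreal (q * d) = ennreal ((p + q) * d)"
proof (cases "0 \<le> d")
  case True thus ?thesis using assms by (simp flip: ennreal_plus add: distrib_right)
next
  case False
  hence "p * d \<le> 0" "q * d \<le> 0" "(p + q) * d \<le> 0"
    using assms by (simp_all add: mult_nonneg_nonpos)
  thus ?thesis by (simp add: ennreal_neg)
qed

lemma not_AE_lborel_nonpos: "\<not> (AE \<nu> in lborel. (\<nu>::real) \<le> 0)"
proof
  assume "AE \<nu> in lborel. (\<nu>::real) \<le> 0"
  then obtain N where N: "{x\<in>space lborel. \<not> (x::real) \<le> 0} \<subseteq> N" "emeasure lborel N = 0" "N \<in> sets lborel"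
    using AE_E by metis
  have "emeasure lborel {0<..(1::real)} \<le> emeasure lborel N"
    using N by (intro emeasure_mono) auto
  thus False using N by simp
qed

definition phase_space :: "real \<Rightarrow> (real \<times> real \<times> real) set" where
  "phase_space Z = {0<..<Z} \<times> ({-1<..<1} \<times> {0<..})"

locale ordered_rte_solutions =
  fixes hb c kB Z \<kappa>M :: real
    and \<kappa> a :: "real \<Rightarrow> real"
    and Qp Qm Rp Rm :: "real \<Rightarrow> real \<Rightarrow> real"
    and I I' :: "real \<Rightarrow> real \<Rightarrow> real \<Rightarrow> real"
    and T T' :: "real \<Rightarrow> real"
  assumes phys: "hb > 0" "c > 0" "kB > 0"
    and meas: "\<kappa> \<in> borel_measurable borel" "a \<in> borel_measurable borel"
    and kappa: "\<And>\<nu>. \<nu> > 0 \<Longrightarrow> 0 < \<kappa> \<nu> \<and> \<kappa> \<nu> \<le> \<kappa>M"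
    and albedo: "\<And>\<nu>. \<nu> > 0 \<Longrightarrow> 0 \<le> a \<nu> \<and> a \<nu> < 1"
    and boundary_le: "AE x in lborel2. x \<in> {0<..<1} \<times> {0<..} \<longrightarrow>
               Qp (fst x) (snd x) \<le> Rp (fst x) (snd x) \<and> Qm (fst x) (snd x) \<le> Rm (fst x) (snd x)"
    and sol: "rte_solution hb c kB Z \<kappa> a Qp Qm I T"
    and sol': "rte_solution hb c kB Z \<kappa> a Rp Rm I' T'"
begin

text \<open>The intensities cut off outside the phase space; this changes neither \<open>Jmean\<close> at depths
  in \<open>(0, Z)\<close> nor the claim, but makes them integrable on all of \<open>\<real>\<^sup>3\<close>.\<close>
definition "Iz \<tau> \<mu> \<nu> = indicator (phase_space Z) (\<tau>, \<mu>, \<nu>) * I \<tau> \<mu> \<nu>"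
definition "I'z \<tau> \<mu> \<nu> = indicator (phase_space Z) (\<tau>, \<mu>, \<nu>) * I' \<tau> \<mu> \<nu>"

definition "Sz \<nu> t = src hb c kB a Iz T \<nu> t"
definition "Sz' \<nu> t = src hb c kB a I'z T' \<nu> t"

definition "src_excess \<nu> t = ennreal (Sz \<nu> t - Sz' \<nu> t)"
definition "transported_excess \<tau> \<mu> \<nu> =
  (\<integral>\<^sup>+t. transport_kernel Z (\<kappa> \<nu>) \<tau> \<mu> t * src_excess \<nu> t \<partial>lborel)"
definition "intensity_excess \<tau> \<mu> \<nu> = ennreal (\<kappa> \<nu> / 2) * ennreal (Iz \<tau> \<mu> \<nu> - I'z \<tau> \<mu> \<nu>)"
definition "transport_bound \<tau> \<mu> \<nu> = ennreal (\<kappa> \<nu> / 2) * transported_excess \<tau> \<mu> \<nu>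
  * indicator {0<..<Z} \<tau> * indicator {-1<..<1} \<mu> * indicator {0<..} \<nu>"
definition "emission_excess \<nu> t = ennreal (\<kappa> \<nu>) * src_excess \<nu> t
  * indicator {0<..<Z} t * indicator {0<..} \<nu>"
definition "escape_loss \<nu> t = src_excess \<nu> t * indicator {0<..<Z} t
  * escape_rate Z (\<kappa> \<nu>) t * indicator {0<..} \<nu>"

definition "planck_power s =
  (\<integral>\<^sup>+\<nu>. ennreal (\<kappa> \<nu> * (1 - a \<nu>) * planck hb c kB \<nu> s) * indicator {0<..} \<nu> \<partial>lborel)"
definition "planck_power_excess s s' =
  (\<integral>\<^sup>+\<nu>. ennreal (\<kappa> \<nu> * (1 - a \<nu>) * (planck hb c kB \<nu> s - planck hb c kB \<nu> s'))
     * indicator {0<..} \<nu> \<partial>lborel)"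
definition "absorbed_power F \<tau> =
  (\<integral>\<^sup>+\<nu>. ennreal (\<kappa> \<nu> * (1 - a \<nu>) * Jmean F \<nu> \<tau>) * indicator {0<..} \<nu> \<partial>lborel)"
definition "absorbed_excess \<tau> =
  (\<integral>\<^sup>+\<nu>. ennreal (\<kappa> \<nu> * (1 - a \<nu>) * (Jmean Iz \<nu> \<tau> - Jmean I'z \<nu> \<tau>))
     * indicator {0<..} \<nu> \<partial>lborel)"

lemma kappaM_pos: "\<kappa>M > 0"
  using kappa[of 1] by auto

lemma absorption_nonneg: "\<nu> > 0 \<Longrightarrow> 0 \<le> \<kappa> \<nu> * (1 - a \<nu>)"
  using kappa[of \<nu>] albedo[of \<nu>] by auto

lemma measurable_temperature[measurable]:
  "T \<in> borel_measurable borel" "T' \<in> borel_measurable borel"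
  using sol sol' unfolding rte_solution_def by (auto simp: measurable_lborel1)

lemma measurable_coefficients[measurable (raw)]:
  "f \<in> borel_measurable M \<Longrightarrow> (\<lambda>x. \<kappa> (f x)) \<in> borel_measurable M"
  "f \<in> borel_measurable M \<Longrightarrow> (\<lambda>x. a (f x)) \<in> borel_measurable M"
  using measurable_compose[OF _ meas(1)] measurable_compose[OF _ meas(2)] by auto

lemma integrable_Iz:
  "integrable lborel3 (\<lambda>(\<tau>, \<mu>, \<nu>). Iz \<tau> \<mu> \<nu>)" "integrable lborel3 (\<lambda>(\<tau>, \<mu>, \<nu>). I'z \<tau> \<mu> \<nu>)"
proof -
  have "set_integrable lborel3 (phase_space Z) (\<lambda>(\<tau>, \<mu>, \<nu>). I \<tau> \<mu> \<nu>)"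
       "set_integrable lborel3 (phase_space Z) (\<lambda>(\<tau>, \<mu>, \<nu>). I' \<tau> \<mu> \<nu>)"
    using sol sol' unfolding rte_solution_def phase_space_def by auto
  thus "integrable lborel3 (\<lambda>(\<tau>, \<mu>, \<nu>). Iz \<tau> \<mu> \<nu>)" "integrable lborel3 (\<lambda>(\<tau>, \<mu>, \<nu>). I'z \<tau> \<mu> \<nu>)"
    unfolding set_integrable_def Iz_def I'z_def by (auto simp: case_prod_beta')
qed

lemma measurable_Iz[measurable (raw)]:
  assumes "f \<in> borel_measurable M" "g \<in> borel_measurable M" "h \<in> borel_measurable M"
  shows "(\<lambda>x. Iz (f x) (g x) (h x)) \<in> borel_measurable M"
    "(\<lambda>x. I'z (f x) (g x) (h x)) \<in> borel_measurable M"
  using measurable_compose[OF measurable_Pair3[OF assms] borel_measurable_integrable[OF integrable_Iz(1)]]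
    measurable_compose[OF measurable_Pair3[OF assms] borel_measurable_integrable[OF integrable_Iz(2)]]
  by simp_all

lemma measurable_Jmean_Iz[measurable (raw)]:
  assumes "f \<in> borel_measurable M" "h \<in> borel_measurable M"
  shows "(\<lambda>x. Jmean Iz (f x) (h x)) \<in> borel_measurable M"
    "(\<lambda>x. Jmean I'z (f x) (h x)) \<in> borel_measurable M"
proof -
  have "(\<lambda>(\<nu>, t). Jmean Iz \<nu> t) \<in> borel_measurable lborel2"
       "(\<lambda>(\<nu>, t). Jmean I'z \<nu> t) \<in> borel_measurable lborel2"
    unfolding Jmean_def set_lebesgue_integral_def by measurable
  moreover have "(\<lambda>x. (f x, h x)) \<in> M \<rightarrow>\<^sub>M lborel2"
    using assms by (auto intro!: measurable_Pair simp: measurable_lborel2)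
  ultimately show "(\<lambda>x. Jmean Iz (f x) (h x)) \<in> borel_measurable M"
    "(\<lambda>x. Jmean I'z (f x) (h x)) \<in> borel_measurable M"
    using measurable_compose by fastforce+
qed

lemma measurable_Sz[measurable (raw)]:
  assumes [measurable]: "f \<in> borel_measurable M" "h \<in> borel_measurable M"
  shows "(\<lambda>x. Sz (f x) (h x)) \<in> borel_measurable M" "(\<lambda>x. Sz' (f x) (h x)) \<in> borel_measurable M"
    "(\<lambda>x. src_excess (f x) (h x)) \<in> borel_measurable M"
  unfolding src_excess_def Sz_def Sz'_def src_def by measurable

lemma measurable_transported_excess[measurable (raw)]:
  assumes "f \<in> borel_measurable M" "g \<in> borel_measurable M" "h \<in> borel_measurable M"
  shows "(\<lambda>x. transported_excess (f x) (g x) (h x)) \<in> borel_measurable M"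
proof -
  have "(\<lambda>x. transported_excess (fst x) (fst (snd x)) (snd (snd x))) \<in> borel_measurable lborel3"
    unfolding transported_excess_def by measurable
  from measurable_compose[OF measurable_Pair3[OF assms] this] show ?thesis by simp
qed

lemma measurable_excesses[measurable (raw)]:
  assumes [measurable]: "f \<in> borel_measurable M" "g \<in> borel_measurable M" "h \<in> borel_measurable M"
  shows "(\<lambda>x. intensity_excess (f x) (g x) (h x)) \<in> borel_measurable M"
    "(\<lambda>x. transport_bound (f x) (g x) (h x)) \<in> borel_measurable M"
    "(\<lambda>x. emission_excess (f x) (h x)) \<in> borel_measurable M"
    "(\<lambda>x. escape_loss (f x) (h x)) \<in> borel_measurable M"
  unfolding intensity_excess_def transport_bound_def emission_excess_def escape_loss_def
  by measurable

lemma Jmean_eq_Jmean_Iz: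
  assumes "t \<in> {0<..<Z}" "\<nu> > 0"
  shows "Jmean I \<nu> t = Jmean Iz \<nu> t" "Jmean I' \<nu> t = Jmean I'z \<nu> t"
  using assms unfolding Jmean_def Iz_def I'z_def
  by (auto intro!: set_lebesgue_integral_cong simp: phase_space_def)

lemma src_eq_Sz:
  assumes "t \<in> {0<..<Z}" "\<nu> > 0"
  shows "src hb c kB a I T \<nu> t = Sz \<nu> t" "src hb c kB a I' T' \<nu> t = Sz' \<nu> t"
  unfolding Sz_def Sz'_def src_def using Jmean_eq_Jmean_Iz[OF assms] by auto

lemma Jmean_Iz_eq:
  "Jmean Iz \<nu> \<tau> = (1/2) * (\<integral>\<mu>. Iz \<tau> \<mu> \<nu> \<partial>lborel)" "Jmean I'z \<nu> \<tau> = (1/2) * (\<integral>\<mu>. I'z \<tau> \<mu> \<nu> \<partial>lborel)"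
  unfolding Jmean_def set_lebesgue_integral_def
  by (auto intro!: arg_cong[where f="\<lambda>x. _ * x"] Bochner_Integration.integral_cong
      simp: Iz_def I'z_def phase_space_def indicator_def)

lemma mild_excess_le_transported:
  assumes \<nu>: "\<nu> > 0"
    and w: "\<And>t. 0 \<le> w t" "w \<in> borel_measurable borel"
    and A: "A \<in> sets borel" "A \<subseteq> {0<..<Z}"
      "\<And>t. t \<in> A \<Longrightarrow> transport_kernel Z (\<kappa> \<nu>) \<tau> \<mu> t = ennreal (w t)"
    and W: "AE t in lborel. t \<in> W \<longleftrightarrow> t \<in> A"
    and b: "0 \<le> b" and qr: "q \<le> r"
    and eq: "ennreal (I \<tau> \<mu> \<nu>) = ennreal (b * q)
      + (\<integral>\<^sup>+t. ennreal (w t * src hb c kB a I T \<nu> t) * indicator W t \<partial>lborel)"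
    and eq': "ennreal (I' \<tau> \<mu> \<nu>) = ennreal (b * r)
      + (\<integral>\<^sup>+t. ennreal (w t * src hb c kB a I' T' \<nu> t) * indicator W t \<partial>lborel)"
  shows "ennreal (I \<tau> \<mu> \<nu>) \<le> ennreal (I' \<tau> \<mu> \<nu>) + transported_excess \<tau> \<mu> \<nu>"
proof -
  have [measurable]: "w \<in> borel_measurable borel" "A \<in> sets lborel" using w(2) A(1) by simp_all
  have restrict: "(\<integral>\<^sup>+t. ennreal (w t * src hb c kB a I T \<nu> t) * indicator W t \<partial>lborel)
      = (\<integral>\<^sup>+t. ennreal (w t * Sz \<nu> t) * indicator A t \<partial>lborel)"
    "(\<integral>\<^sup>+t. ennreal (w t * src hb c kB a I' T' \<nu> t) * indicator W t \<partial>lborel)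
      = (\<integral>\<^sup>+t. ennreal (w t * Sz' \<nu> t) * indicator A t \<partial>lborel)"
    using W A(2) \<nu>
    by (auto intro!: nn_integral_cong_AE elim!: eventually_mono simp: src_eq_Sz indicator_def subset_eq)
  have "(\<integral>\<^sup>+t. ennreal (w t * Sz \<nu> t) * indicator A t \<partial>lborel)
     \<le> (\<integral>\<^sup>+t. ennreal (w t * Sz' \<nu> t) * indicator A t
          + transport_kernel Z (\<kappa> \<nu>) \<tau> \<mu> t * src_excess \<nu> t \<partial>lborel)"
  proof (intro nn_integral_mono)
    fix t
    have "ennreal (w t * Sz \<nu> t) \<le> ennreal (w t * Sz' \<nu> t) + ennreal (w t * Sz \<nu> t - w t * Sz' \<nu> t)"
      by (rule ennreal_le_add_diff)
    also have "ennreal (w t * Sz \<nu> t - w t * Sz' \<nu> t) = ennreal (w t) * src_excess \<nu> t"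
      unfolding src_excess_def using w(1)[of t] by (simp add: ennreal_mult'[symmetric] right_diff_distrib)
    finally show "ennreal (w t * Sz \<nu> t) * indicator A t
        \<le> ennreal (w t * Sz' \<nu> t) * indicator A t + transport_kernel Z (\<kappa> \<nu>) \<tau> \<mu> t * src_excess \<nu> t"
      using A(3) by (cases "t \<in> A") simp_all
  qed
  also have "\<dots> = (\<integral>\<^sup>+t. ennreal (w t * Sz' \<nu> t) * indicator A t \<partial>lborel) + transported_excess \<tau> \<mu> \<nu>"
    unfolding transported_excess_def by (rule nn_integral_add) measurable
  finally have source: "(\<integral>\<^sup>+t. ennreal (w t * Sz \<nu> t) * indicator A t \<partial>lborel)
     \<le> (\<integral>\<^sup>+t. ennreal (w t * Sz' \<nu> t) * indicator A t \<partial>lborel) + transported_excess \<tau> \<mu> \<nu>" .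
  have "ennreal (b * q) \<le> ennreal (b * r)"
    using b qr by (intro ennreal_leI mult_left_mono)
  with source show ?thesis
    unfolding eq eq' restrict by (metis (no_types, lifting) add.assoc add_mono)
qed

lemma boundary_data_le_lborel3:
  "AE x in lborel3. fst (snd x) \<noteq> 0
     \<and> (snd x \<in> {0<..<1} \<times> {0<..} \<longrightarrow> Qp (fst (snd x)) (snd (snd x)) \<le> Rp (fst (snd x)) (snd (snd x)))
     \<and> ((- fst (snd x), snd (snd x)) \<in> {0<..<1} \<times> {0<..} \<longrightarrow>
          Qm (- fst (snd x)) (snd (snd x)) \<le> Rm (- fst (snd x)) (snd (snd x)))"
proof -
  have "AE x in lborel3. fst (snd x) \<noteq> 0"
    by (intro AE_pair_sndI AE_pair_fstI AE_lborel_singleton sigma_finite_lborel sigma_finite_lborel2)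
  moreover have "AE x in lborel3. snd x \<in> {0<..<1} \<times> {0<..} \<longrightarrow>
      Qp (fst (snd x)) (snd (snd x)) \<le> Rp (fst (snd x)) (snd (snd x))"
    using AE_pair_sndI[OF sigma_finite_lborel2 boundary_le, of lborel] by (auto elim!: eventually_mono)
  moreover have "AE x in lborel3. (- fst (snd x), snd (snd x)) \<in> {0<..<1} \<times> {0<..} \<longrightarrow>
      Qm (- fst (snd x)) (snd (snd x)) \<le> Rm (- fst (snd x)) (snd (snd x))"
    using AE_pair_sndI[OF sigma_finite_lborel2 AE_lborel2_reflect_fst[OF boundary_le], of lborel]
    by (auto elim!: eventually_mono)
  ultimately show ?thesis by eventually_elim blast
qed

lemma intensity_le_transported:
  "AE x in lborel3. x \<in> phase_space Z \<longrightarrow>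
     ennreal (I (fst x) (fst (snd x)) (snd (snd x)))
       \<le> ennreal (I' (fst x) (fst (snd x)) (snd (snd x))) + transported_excess (fst x) (fst (snd x)) (snd (snd x))"
proof -
  note mild = sol[unfolded rte_solution_def, THEN conjunct2, THEN conjunct2, THEN conjunct2, THEN conjunct2]
  note mild' = sol'[unfolded rte_solution_def, THEN conjunct2, THEN conjunct2, THEN conjunct2, THEN conjunct2]
  show ?thesis
    using mild mild' boundary_data_le_lborel3
  proof eventually_elim
    case (elim x)
    obtain \<tau> \<mu> \<nu> where x: "x = (\<tau>, \<mu>, \<nu>)" by (cases x) auto
    note facts = elim[unfolded x, simplified Let_def fst_conv snd_conv]
    have "ennreal (I \<tau> \<mu> \<nu>) \<le> ennreal (I' \<tau> \<mu> \<nu>) + transported_excess \<tau> \<mu> \<nu>"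
      if dom: "(\<tau>, \<mu>, \<nu>) \<in> phase_space Z"
    proof -
      have \<tau>: "0 < \<tau>" "\<tau> < Z" and \<mu>: "-1 < \<mu>" "\<mu> < 1" and \<nu>: "\<nu> > 0"
        using dom by (auto simp: phase_space_def)
      have k: "0 < \<kappa> \<nu>" using kappa[OF \<nu>] by simp
      have "\<mu> \<noteq> 0" using facts by simp
      then consider "0 < \<mu>" | "\<mu> < 0" by linarith
      then show ?thesis
      proof cases
        case 1
        show ?thesis
          by (rule mild_excess_le_transported[OF \<nu>, where A="{0<..\<tau>}" and W="{0..\<tau>}"
                and w="\<lambda>t. exp (- \<kappa> \<nu> * (\<tau> - t) / \<mu>) * (\<kappa> \<nu> / \<mu>)"
                and b="exp (- \<kappa> \<nu> * \<tau> / \<mu>)" and q="Qp \<mu> \<nu>" and r="Rp \<mu> \<nu>"])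
            (use 1 \<tau> \<mu> \<nu> k facts AE_lborel_singleton[of 0] in
              \<open>auto simp: transport_kernel_def elim!: eventually_mono\<close>)
      next
        case 2
        have w: "0 \<le> exp (- \<kappa> \<nu> * (t - \<tau>) / \<bar>\<mu>\<bar>) * (\<kappa> \<nu> / \<bar>\<mu>\<bar>)" for t
          using k by simp
        show ?thesis
          by (rule mild_excess_le_transported[where A="{\<tau>..<Z}" and W="{\<tau>..Z}"
                and w="\<lambda>t. exp (- \<kappa> \<nu> * (t - \<tau>) / \<bar>\<mu>\<bar>) * (\<kappa> \<nu> / \<bar>\<mu>\<bar>)"
                and b="exp (- \<kappa> \<nu> * (Z - \<tau>) / \<bar>\<mu>\<bar>)" and q="Qm \<bar>\<mu>\<bar> \<nu>" and r="Rm \<bar>\<mu>\<bar> \<nu>",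
                OF \<nu> w])
            (use 2 \<tau> \<mu> \<nu> k facts AE_lborel_singleton[of Z] in
              \<open>auto simp: transport_kernel_def elim!: eventually_mono\<close>)
      qed
    qed
    thus ?case using x by simp
  qed
qed

lemma intensity_excess_le_transport_bound:
  "AE x in lborel3. intensity_excess (fst x) (fst (snd x)) (snd (snd x))
                    \<le> transport_bound (fst x) (fst (snd x)) (snd (snd x))"
proof -
  have nonneg': "AE x in lborel3. x \<in> phase_space Z \<longrightarrow> 0 \<le> I' (fst x) (fst (snd x)) (snd (snd x))"
    using sol' unfolding rte_solution_def phase_space_def by blast
  show ?thesis
    using intensity_le_transported nonneg'
  proof eventually_elim
    case (elim x)
    obtain \<tau> \<mu> \<nu> where x: "x = (\<tau>, \<mu>, \<nu>)" by (cases x) auto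
    have "intensity_excess \<tau> \<mu> \<nu> \<le> transport_bound \<tau> \<mu> \<nu>"
    proof (cases "(\<tau>, \<mu>, \<nu>) \<in> phase_space Z")
      case True
      hence "ennreal (I \<tau> \<mu> \<nu> - I' \<tau> \<mu> \<nu>) \<le> transported_excess \<tau> \<mu> \<nu>"
        using elim x by (intro ennreal_diff_le_of_le_add) auto
      thus ?thesis using True
        by (auto simp: intensity_excess_def transport_bound_def Iz_def I'z_def phase_space_def
            intro!: mult_left_mono)
    qed (simp add: intensity_excess_def Iz_def I'z_def)
    thus ?case using x by simp
  qed
qed

lemma Jmean_excess_le_intensity_excess:
  assumes \<nu>: "\<nu> > 0"
    and int: "integrable lborel (\<lambda>\<mu>. Iz \<tau> \<mu> \<nu>)" "integrable lborel (\<lambda>\<mu>. I'z \<tau> \<mu> \<nu>)"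
  shows "ennreal (\<kappa> \<nu> * (Jmean Iz \<nu> \<tau> - Jmean I'z \<nu> \<tau>)) \<le> (\<integral>\<^sup>+\<mu>. intensity_excess \<tau> \<mu> \<nu> \<partial>lborel)"
proof -
  have k0: "0 \<le> \<kappa> \<nu> / 2" using kappa[OF \<nu>] by simp
  have "(\<integral>\<mu>. \<kappa> \<nu> / 2 * (Iz \<tau> \<mu> \<nu> - I'z \<tau> \<mu> \<nu>) \<partial>lborel)
      = \<kappa> \<nu> / 2 * ((\<integral>\<mu>. Iz \<tau> \<mu> \<nu> \<partial>lborel) - (\<integral>\<mu>. I'z \<tau> \<mu> \<nu> \<partial>lborel))"
    using Bochner_Integration.integral_diff[OF int] by simp
  hence "\<kappa> \<nu> * (Jmean Iz \<nu> \<tau> - Jmean I'z \<nu> \<tau>) = (\<integral>\<mu>. \<kappa> \<nu> / 2 * (Iz \<tau> \<mu> \<nu> - I'z \<tau> \<mu> \<nu>) \<partial>lborel)"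
    by (simp add: Jmean_Iz_eq right_diff_distrib)
  hence "ennreal (\<kappa> \<nu> * (Jmean Iz \<nu> \<tau> - Jmean I'z \<nu> \<tau>))
      = ennreal (\<integral>\<mu>. \<kappa> \<nu> / 2 * (Iz \<tau> \<mu> \<nu> - I'z \<tau> \<mu> \<nu>) \<partial>lborel)"
    by (rule arg_cong)
  also have "\<dots> \<le> (\<integral>\<^sup>+\<mu>. ennreal (\<kappa> \<nu> / 2 * (Iz \<tau> \<mu> \<nu> - I'z \<tau> \<mu> \<nu>)) \<partial>lborel)"
    using int by (intro ennreal_integral_le_nn_integral) auto
  also have "\<dots> = (\<integral>\<^sup>+\<mu>. intensity_excess \<tau> \<mu> \<nu> \<partial>lborel)"
    unfolding intensity_excess_def by (intro nn_integral_cong) (simp only: ennreal_mult'[OF k0])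
  finally show ?thesis .
qed

lemma Jmean_excess_integral_le_intensity_excess:
  assumes "AE \<nu> in lborel. integrable lborel (\<lambda>\<mu>. Iz \<tau> \<mu> \<nu>) \<and> integrable lborel (\<lambda>\<mu>. I'z \<tau> \<mu> \<nu>)"
  shows "(\<integral>\<^sup>+\<nu>. ennreal (\<kappa> \<nu> * (Jmean Iz \<nu> \<tau> - Jmean I'z \<nu> \<tau>)) * indicator {0<..} \<nu> \<partial>lborel)
         \<le> (\<integral>\<^sup>+\<nu>. \<integral>\<^sup>+\<mu>. intensity_excess \<tau> \<mu> \<nu> \<partial>lborel \<partial>lborel)"
proof (rule nn_integral_mono_AE)
  show "AE \<nu> in lborel. ennreal (\<kappa> \<nu> * (Jmean Iz \<nu> \<tau> - Jmean I'z \<nu> \<tau>)) * indicator {0<..} \<nu>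
          \<le> (\<integral>\<^sup>+\<mu>. intensity_excess \<tau> \<mu> \<nu> \<partial>lborel)"
    using assms
  proof eventually_elim
    case (elim \<nu>)
    thus ?case by (cases "\<nu> > 0") (simp_all add: Jmean_excess_le_intensity_excess)
  qed
qed

lemma planck_power_eq_absorbed_power:
  assumes "\<tau> \<in> {0<..<Z}"
  shows "temp_eq hb c kB \<kappa> a I \<tau> s \<Longrightarrow> planck_power s = absorbed_power Iz \<tau>"
    and "temp_eq hb c kB \<kappa> a I' \<tau> s \<Longrightarrow> planck_power s = absorbed_power I'z \<tau>"
  using assms unfolding temp_eq_def planck_power_def absorbed_power_def
  by (auto intro!: nn_integral_cong simp: indicator_def Jmean_eq_Jmean_Iz)

lemma absorbed_power_finite:
  assumes fin: "(\<integral>\<^sup>+\<nu>. \<integral>\<^sup>+\<mu>. ennreal \<bar>I'z \<tau> \<mu> \<nu>\<bar> \<partial>lborel \<partial>lborel) \<noteq> \<infinity>"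
  shows "absorbed_power I'z \<tau> \<noteq> \<infinity>"
proof -
  have "absorbed_power I'z \<tau> \<le> (\<integral>\<^sup>+\<nu>. ennreal (\<kappa>M / 2) * (\<integral>\<^sup>+\<mu>. ennreal \<bar>I'z \<tau> \<mu> \<nu>\<bar> \<partial>lborel) \<partial>lborel)"
    unfolding absorbed_power_def
  proof (intro nn_integral_mono)
    fix \<nu> :: real
    show "ennreal (\<kappa> \<nu> * (1 - a \<nu>) * Jmean I'z \<nu> \<tau>) * indicator {0<..} \<nu>
        \<le> ennreal (\<kappa>M / 2) * (\<integral>\<^sup>+\<mu>. ennreal \<bar>I'z \<tau> \<mu> \<nu>\<bar> \<partial>lborel)"
    proof (cases "\<nu> > 0")
      case True
      let ?w = "\<kappa> \<nu> * (1 - a \<nu>)" and ?J = "\<integral>\<mu>. I'z \<tau> \<mu> \<nu> \<partial>lborel"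
      have "?w \<le> \<kappa> \<nu>" "\<kappa> \<nu> \<le> \<kappa>M"
        using kappa[OF True] albedo[OF True] by (simp_all add: mult_left_le)
      have "?w * Jmean I'z \<nu> \<tau> \<le> ?w * \<bar>Jmean I'z \<nu> \<tau>\<bar>"
        by (rule mult_left_mono[OF abs_ge_self absorption_nonneg[OF True]])
      also have "\<dots> \<le> \<kappa>M * \<bar>Jmean I'z \<nu> \<tau>\<bar>"
        using \<open>?w \<le> \<kappa> \<nu>\<close> \<open>\<kappa> \<nu> \<le> \<kappa>M\<close> by (intro mult_right_mono) simp_all
      also have "\<dots> = \<kappa>M / 2 * norm ?J"
        by (simp add: Jmean_Iz_eq)
      finally have "ennreal (?w * Jmean I'z \<nu> \<tau>) \<le> ennreal (\<kappa>M / 2) * ennreal (norm ?J)"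
        using kappaM_pos by (simp add: ennreal_leI flip: ennreal_mult)
      also have "\<dots> \<le> ennreal (\<kappa>M / 2) * (\<integral>\<^sup>+\<mu>. ennreal \<bar>I'z \<tau> \<mu> \<nu>\<bar> \<partial>lborel)"
        using ennreal_norm_integral_le[of lborel "\<lambda>\<mu>. I'z \<tau> \<mu> \<nu>"] by (simp add: mult_left_mono)
      finally show ?thesis using True by simp
    qed simp
  qed
  also have "\<dots> = ennreal (\<kappa>M / 2) * (\<integral>\<^sup>+\<nu>. \<integral>\<^sup>+\<mu>. ennreal \<bar>I'z \<tau> \<mu> \<nu>\<bar> \<partial>lborel \<partial>lborel)"
    by (rule nn_integral_cmult) measurable
  also have "\<dots> < \<infinity>" using fin by (simp add: ennreal_mult_less_top less_top)
  finally show ?thesis by simp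
qed

lemma planck_power_split:
  assumes "s' \<le> s"
  shows "planck_power s = planck_power s' + planck_power_excess s s'"
proof -
  have "planck_power s = (\<integral>\<^sup>+\<nu>. ennreal (\<kappa> \<nu> * (1 - a \<nu>) * planck hb c kB \<nu> s') * indicator {0<..} \<nu>
       + ennreal (\<kappa> \<nu> * (1 - a \<nu>) * (planck hb c kB \<nu> s - planck hb c kB \<nu> s')) * indicator {0<..} \<nu> \<partial>lborel)"
    unfolding planck_power_def
  proof (intro nn_integral_cong)
    fix \<nu> :: real
    show "ennreal (\<kappa> \<nu> * (1 - a \<nu>) * planck hb c kB \<nu> s) * indicator {0<..} \<nu>
       = ennreal (\<kappa> \<nu> * (1 - a \<nu>) * planck hb c kB \<nu> s') * indicator {0<..} \<nu>
       + ennreal (\<kappa> \<nu> * (1 - a \<nu>) * (planck hb c kB \<nu> s - planck hb c kB \<nu> s')) * indicator {0<..} \<nu>"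
    proof (cases "\<nu> > 0")
      case True
      have "0 \<le> \<kappa> \<nu> * (1 - a \<nu>) * planck hb c kB \<nu> s'"
        using absorption_nonneg[OF True] planck_nonneg[OF phys True] by simp
      moreover have "0 \<le> \<kappa> \<nu> * (1 - a \<nu>) * (planck hb c kB \<nu> s - planck hb c kB \<nu> s')"
        using absorption_nonneg[OF True] planck_mono[OF phys True assms] by simp
      ultimately show ?thesis using True
        by (simp add: ennreal_plus[symmetric] right_diff_distrib del: ennreal_plus)
    qed simp
  qed
  also have "\<dots> = planck_power s' + planck_power_excess s s'"
    unfolding planck_power_def planck_power_excess_def by (rule nn_integral_add) measurable
  finally show ?thesis .
qed

lemma absorbed_power_le_add_excess: "absorbed_power Iz \<tau> \<le> absorbed_power I'z \<tau> + absorbed_excess \<tau>"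
proof -
  have "absorbed_power Iz \<tau> \<le> (\<integral>\<^sup>+\<nu>. ennreal (\<kappa> \<nu> * (1 - a \<nu>) * Jmean I'z \<nu> \<tau>) * indicator {0<..} \<nu>
       + ennreal (\<kappa> \<nu> * (1 - a \<nu>) * (Jmean Iz \<nu> \<tau> - Jmean I'z \<nu> \<tau>)) * indicator {0<..} \<nu> \<partial>lborel)"
    unfolding absorbed_power_def
    using ennreal_le_add_diff
    by (intro nn_integral_mono) (simp add: right_diff_distrib indicator_def)
  also have "\<dots> = absorbed_power I'z \<tau> + absorbed_excess \<tau>"
    unfolding absorbed_power_def absorbed_excess_def by (rule nn_integral_add) measurable
  finally show ?thesis .
qed

lemma planck_power_excess_le_absorbed_excess:
  assumes \<tau>: "\<tau> \<in> {0<..<Z}"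
    and eq: "temp_eq hb c kB \<kappa> a I \<tau> (T \<tau>)" and eq': "temp_eq hb c kB \<kappa> a I' \<tau> (T' \<tau>)"
    and fin: "absorbed_power I'z \<tau> \<noteq> \<infinity>"
  shows "planck_power_excess (T \<tau>) (T' \<tau>) \<le> absorbed_excess \<tau>"
proof (cases "T \<tau> \<le> T' \<tau>")
  case True
  have "\<kappa> \<nu> * (1 - a \<nu>) * (planck hb c kB \<nu> (T \<tau>) - planck hb c kB \<nu> (T' \<tau>)) \<le> 0" if "\<nu> > 0" for \<nu>
    using planck_mono[OF phys that True] absorption_nonneg[OF that] by (simp add: mult_nonneg_nonpos)
  hence "planck_power_excess (T \<tau>) (T' \<tau>) = (\<integral>\<^sup>+(\<nu>::real). 0 \<partial>lborel)"
    unfolding planck_power_excess_def by (intro nn_integral_cong) (auto simp: indicator_def ennreal_eq_0_iff)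
  thus ?thesis by simp
next
  case False
  have "planck_power (T' \<tau>) + planck_power_excess (T \<tau>) (T' \<tau>) = absorbed_power Iz \<tau>"
    using planck_power_split[of "T' \<tau>" "T \<tau>"] False planck_power_eq_absorbed_power(1)[OF \<tau> eq] by simp
  also have "\<dots> \<le> absorbed_power I'z \<tau> + absorbed_excess \<tau>"
    by (rule absorbed_power_le_add_excess)
  finally show ?thesis
    using fin planck_power_eq_absorbed_power(2)[OF \<tau> eq'] by (simp add: ennreal_add_left_cancel_le)
qed

lemma absorbed_excess_le_intensity_excess:
  assumes "AE \<nu> in lborel. integrable lborel (\<lambda>\<mu>. Iz \<tau> \<mu> \<nu>) \<and> integrable lborel (\<lambda>\<mu>. I'z \<tau> \<mu> \<nu>)"
  shows "absorbed_excess \<tau> \<le> (\<integral>\<^sup>+\<nu>. \<integral>\<^sup>+\<mu>. intensity_excess \<tau> \<mu> \<nu> \<partial>lborel \<partial>lborel)"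
proof -
  have "absorbed_excess \<tau>
      \<le> (\<integral>\<^sup>+\<nu>. ennreal (\<kappa> \<nu> * (Jmean Iz \<nu> \<tau> - Jmean I'z \<nu> \<tau>)) * indicator {0<..} \<nu> \<partial>lborel)"
    unfolding absorbed_excess_def
  proof (intro nn_integral_mono)
    fix \<nu> :: real
    show "ennreal (\<kappa> \<nu> * (1 - a \<nu>) * (Jmean Iz \<nu> \<tau> - Jmean I'z \<nu> \<tau>)) * indicator {0<..} \<nu>
        \<le> ennreal (\<kappa> \<nu> * (Jmean Iz \<nu> \<tau> - Jmean I'z \<nu> \<tau>)) * indicator {0<..} \<nu>"
    proof (cases "\<nu> > 0")
      case True
      have "0 \<le> \<kappa> \<nu> * a \<nu>" using kappa[OF True] albedo[OF True] by simp
      have "ennreal (\<kappa> \<nu> * (1 - a \<nu>) * (Jmean Iz \<nu> \<tau> - Jmean I'z \<nu> \<tau>))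
          \<le> ennreal (\<kappa> \<nu> * a \<nu> * (Jmean Iz \<nu> \<tau> - Jmean I'z \<nu> \<tau>))
            + ennreal (\<kappa> \<nu> * (1 - a \<nu>) * (Jmean Iz \<nu> \<tau> - Jmean I'z \<nu> \<tau>))"
        by (rule add_increasing) simp_all
      also have "\<dots> = ennreal ((\<kappa> \<nu> * a \<nu> + \<kappa> \<nu> * (1 - a \<nu>)) * (Jmean Iz \<nu> \<tau> - Jmean I'z \<nu> \<tau>))"
        using \<open>0 \<le> \<kappa> \<nu> * a \<nu>\<close> absorption_nonneg[OF True] by (rule ennreal_mult_add)
      also have "\<dots> = ennreal (\<kappa> \<nu> * (Jmean Iz \<nu> \<tau> - Jmean I'z \<nu> \<tau>))"
        by (simp add: algebra_simps)
      finally show ?thesis using True by simp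
    qed simp
  qed
  also have "\<dots> \<le> (\<integral>\<^sup>+\<nu>. \<integral>\<^sup>+\<mu>. intensity_excess \<tau> \<mu> \<nu> \<partial>lborel \<partial>lborel)"
    using assms by (rule Jmean_excess_integral_le_intensity_excess)
  finally show ?thesis .
qed

lemma emission_excess_le_scattering_and_planck:
  assumes \<tau>: "\<tau> \<in> {0<..<Z}"
  shows "emission_excess \<nu> \<tau>
    \<le> ennreal (\<kappa> \<nu> * a \<nu> * (Jmean Iz \<nu> \<tau> - Jmean I'z \<nu> \<tau>)) * indicator {0<..} \<nu>
      + ennreal (\<kappa> \<nu> * (1 - a \<nu>) * (planck hb c kB \<nu> (T \<tau>) - planck hb c kB \<nu> (T' \<tau>)))
        * indicator {0<..} \<nu>"
proof (cases "\<nu> > 0")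
  case True
  have k0: "0 \<le> \<kappa> \<nu>" using kappa[OF True] by simp
  have "emission_excess \<nu> \<tau> = ennreal (\<kappa> \<nu> * (Sz \<nu> \<tau> - Sz' \<nu> \<tau>))"
    using True \<tau> unfolding emission_excess_def src_excess_def by (simp add: ennreal_mult'[OF k0])
  also have "\<dots> = ennreal (\<kappa> \<nu> * a \<nu> * (Jmean Iz \<nu> \<tau> - Jmean I'z \<nu> \<tau>)
      + \<kappa> \<nu> * (1 - a \<nu>) * (planck hb c kB \<nu> (T \<tau>) - planck hb c kB \<nu> (T' \<tau>)))"
    unfolding Sz_def Sz'_def src_def by (simp add: algebra_simps)
  also have "\<dots> \<le> ennreal (\<kappa> \<nu> * a \<nu> * (Jmean Iz \<nu> \<tau> - Jmean I'z \<nu> \<tau>))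
      + ennreal (\<kappa> \<nu> * (1 - a \<nu>) * (planck hb c kB \<nu> (T \<tau>) - planck hb c kB \<nu> (T' \<tau>)))"
    by (rule ennreal_add_le)
  finally show ?thesis using True by simp
qed (simp add: emission_excess_def)

lemma emission_excess_le_intensity_excess:
  assumes \<tau>: "\<tau> \<in> {0<..<Z}"
    and eq: "temp_eq hb c kB \<kappa> a I \<tau> (T \<tau>)" and eq': "temp_eq hb c kB \<kappa> a I' \<tau> (T' \<tau>)"
    and int: "AE \<nu> in lborel. integrable lborel (\<lambda>\<mu>. Iz \<tau> \<mu> \<nu>) \<and> integrable lborel (\<lambda>\<mu>. I'z \<tau> \<mu> \<nu>)"
    and fin: "(\<integral>\<^sup>+\<nu>. \<integral>\<^sup>+\<mu>. ennreal \<bar>I'z \<tau> \<mu> \<nu>\<bar> \<partial>lborel \<partial>lborel) \<noteq> \<infinity>"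
  shows "(\<integral>\<^sup>+\<nu>. emission_excess \<nu> \<tau> \<partial>lborel) \<le> (\<integral>\<^sup>+\<nu>. \<integral>\<^sup>+\<mu>. intensity_excess \<tau> \<mu> \<nu> \<partial>lborel \<partial>lborel)"
proof -
  let ?d = "\<lambda>\<nu>. Jmean Iz \<nu> \<tau> - Jmean I'z \<nu> \<tau>"
  let ?scattering = "\<lambda>\<nu>. ennreal (\<kappa> \<nu> * a \<nu> * ?d \<nu>) * indicator {0<..} \<nu>"
  have "(\<integral>\<^sup>+\<nu>. emission_excess \<nu> \<tau> \<partial>lborel) \<le> (\<integral>\<^sup>+\<nu>. ?scattering \<nu>
      + ennreal (\<kappa> \<nu> * (1 - a \<nu>) * (planck hb c kB \<nu> (T \<tau>) - planck hb c kB \<nu> (T' \<tau>)))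
        * indicator {0<..} \<nu> \<partial>lborel)"
    by (intro nn_integral_mono emission_excess_le_scattering_and_planck[OF \<tau>])
  also have "\<dots> = (\<integral>\<^sup>+\<nu>. ?scattering \<nu> \<partial>lborel) + planck_power_excess (T \<tau>) (T' \<tau>)"
    unfolding planck_power_excess_def by (rule nn_integral_add) measurable
  also have "\<dots> \<le> (\<integral>\<^sup>+\<nu>. ?scattering \<nu> \<partial>lborel) + absorbed_excess \<tau>"
    using planck_power_excess_le_absorbed_excess[OF \<tau> eq eq' absorbed_power_finite[OF fin]]
    by (rule add_left_mono)
  also have "\<dots> = (\<integral>\<^sup>+\<nu>. ?scattering \<nu> + ennreal (\<kappa> \<nu> * (1 - a \<nu>) * ?d \<nu>) * indicator {0<..} \<nu> \<partial>lborel)"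
    unfolding absorbed_excess_def by (rule nn_integral_add[symmetric]) measurable
  also have "\<dots> = (\<integral>\<^sup>+\<nu>. ennreal (\<kappa> \<nu> * ?d \<nu>) * indicator {0<..} \<nu> \<partial>lborel)"
  proof (intro nn_integral_cong)
    fix \<nu> :: real
    show "?scattering \<nu> + ennreal (\<kappa> \<nu> * (1 - a \<nu>) * ?d \<nu>) * indicator {0<..} \<nu>
        = ennreal (\<kappa> \<nu> * ?d \<nu>) * indicator {0<..} \<nu>"
    proof (cases "\<nu> > 0")
      case True
      have "0 \<le> \<kappa> \<nu> * a \<nu>" using kappa[OF True] albedo[OF True] by simp
      have "ennreal (\<kappa> \<nu> * a \<nu> * ?d \<nu>) + ennreal (\<kappa> \<nu> * (1 - a \<nu>) * ?d \<nu>)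
          = ennreal ((\<kappa> \<nu> * a \<nu> + \<kappa> \<nu> * (1 - a \<nu>)) * ?d \<nu>)"
        using \<open>0 \<le> \<kappa> \<nu> * a \<nu>\<close> absorption_nonneg[OF True] by (rule ennreal_mult_add)
      also have "\<dots> = ennreal (\<kappa> \<nu> * ?d \<nu>)"
        by (simp add: algebra_simps)
      finally show ?thesis using True by simp
    qed simp
  qed
  also have "\<dots> \<le> (\<integral>\<^sup>+\<nu>. \<integral>\<^sup>+\<mu>. intensity_excess \<tau> \<mu> \<nu> \<partial>lborel \<partial>lborel)"
    using int by (rule Jmean_excess_integral_le_intensity_excess)
  finally show ?thesis .
qed

lemma planck_power_excess_pos:
  assumes "s' < s" "0 \<le> s'"
  shows "planck_power_excess s s' \<noteq> 0"
proof
  assume "planck_power_excess s s' = 0"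
  hence "AE \<nu> in lborel. ennreal (\<kappa> \<nu> * (1 - a \<nu>) * (planck hb c kB \<nu> s - planck hb c kB \<nu> s'))
           * indicator {0<..} \<nu> = 0"
    unfolding planck_power_excess_def by (subst (asm) nn_integral_0_iff_AE) measurable
  moreover have "0 < \<kappa> \<nu> * (1 - a \<nu>) * (planck hb c kB \<nu> s - planck hb c kB \<nu> s')" if \<nu>: "\<nu> > 0" for \<nu>
    using kappa[OF \<nu>] albedo[OF \<nu>] planck_strict_mono[OF phys \<nu> assms(1)] assms by simp
  ultimately have "AE \<nu> in lborel. (\<nu>::real) \<le> 0"
    by (auto elim!: eventually_mono simp: indicator_def ennreal_eq_0_iff split: if_splits)
      (meson not_le)
  thus False using not_AE_lborel_nonpos by simp
qed

lemma temperature_le_of_no_intensity_excess: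
  assumes \<tau>: "\<tau> \<in> {0<..<Z}"
    and eq: "temp_eq hb c kB \<kappa> a I \<tau> (T \<tau>)" and eq': "temp_eq hb c kB \<kappa> a I' \<tau> (T' \<tau>)"
    and int: "AE \<nu> in lborel. integrable lborel (\<lambda>\<mu>. Iz \<tau> \<mu> \<nu>) \<and> integrable lborel (\<lambda>\<mu>. I'z \<tau> \<mu> \<nu>)"
    and fin: "(\<integral>\<^sup>+\<nu>. \<integral>\<^sup>+\<mu>. ennreal \<bar>I'z \<tau> \<mu> \<nu>\<bar> \<partial>lborel \<partial>lborel) \<noteq> \<infinity>"
    and no_excess: "(\<integral>\<^sup>+\<nu>. \<integral>\<^sup>+\<mu>. intensity_excess \<tau> \<mu> \<nu> \<partial>lborel \<partial>lborel) = 0"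
  shows "T \<tau> \<le> T' \<tau>"
proof (rule ccontr)
  assume "\<not> T \<tau> \<le> T' \<tau>"
  moreover have "0 \<le> T' \<tau>" using eq' unfolding temp_eq_def by simp
  moreover have "planck_power_excess (T \<tau>) (T' \<tau>) \<le> absorbed_excess \<tau>"
    using planck_power_excess_le_absorbed_excess[OF \<tau> eq eq' absorbed_power_finite[OF fin]] .
  moreover have "absorbed_excess \<tau> = 0"
    using absorbed_excess_le_intensity_excess[OF int] no_excess by simp
  ultimately show False using planck_power_excess_pos[of "T' \<tau>" "T \<tau>"] by simp
qed

lemma integrable_slices_AE:
  "AE \<tau> in lborel. (\<integral>\<^sup>+\<nu>. \<integral>\<^sup>+\<mu>. ennreal \<bar>I'z \<tau> \<mu> \<nu>\<bar> \<partial>lborel \<partial>lborel) \<noteq> \<infinity>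
     \<and> (AE \<nu> in lborel. integrable lborel (\<lambda>\<mu>. Iz \<tau> \<mu> \<nu>) \<and> integrable lborel (\<lambda>\<mu>. I'z \<tau> \<mu> \<nu>))"
proof -
  interpret lborel3: pair_sigma_finite lborel lborel2
    by (simp add: pair_sigma_finite_def sigma_finite_lborel sigma_finite_lborel2)
  have "AE \<tau> in lborel. integrable lborel2 (\<lambda>(\<mu>, \<nu>). Iz \<tau> \<mu> \<nu>) \<and> integrable lborel2 (\<lambda>(\<mu>, \<nu>). I'z \<tau> \<mu> \<nu>)"
    using lborel3.AE_integrable_fst'[OF integrable_Iz(1)] lborel3.AE_integrable_fst'[OF integrable_Iz(2)]
    by eventually_elim (simp add: case_prod_beta')
  then show ?thesis
  proof eventually_elim
    case (elim \<tau>)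
    have swapped: "integrable lborel2 (\<lambda>(\<nu>, \<mu>). Iz \<tau> \<mu> \<nu>)" "integrable lborel2 (\<lambda>(\<nu>, \<mu>). I'z \<tau> \<mu> \<nu>)"
      using lborel_pair.integrable_product_swap[OF elim[THEN conjunct1]]
        lborel_pair.integrable_product_swap[OF elim[THEN conjunct2]]
      by (simp_all add: case_prod_beta')
    have "(\<integral>\<^sup>+\<nu>. \<integral>\<^sup>+\<mu>. ennreal \<bar>I'z \<tau> \<mu> \<nu>\<bar> \<partial>lborel \<partial>lborel)
        = (\<integral>\<^sup>+x. norm ((\<lambda>(\<nu>, \<mu>). I'z \<tau> \<mu> \<nu>) x) \<partial>lborel2)"
      by (subst sigma_finite_measure.nn_integral_fst[OF sigma_finite_lborel, symmetric])
        (simp_all add: case_prod_beta')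
    also have "\<dots> < \<infinity>"
      using swapped(2) unfolding integrable_iff_bounded by simp
    moreover have "AE \<nu> in lborel. integrable lborel (\<lambda>\<mu>. Iz \<tau> \<mu> \<nu>) \<and> integrable lborel (\<lambda>\<mu>. I'z \<tau> \<mu> \<nu>)"
      using lborel_pair.AE_integrable_fst'[OF swapped(1)] lborel_pair.AE_integrable_fst'[OF swapped(2)]
      by eventually_elim simp
    ultimately show ?case by simp
  qed
qed

lemma intensity_excess_bounded:
  "intensity_excess \<tau> \<mu> \<nu> \<le> ennreal (\<kappa>M / 2) * (ennreal \<bar>Iz \<tau> \<mu> \<nu>\<bar> + ennreal \<bar>I'z \<tau> \<mu> \<nu>\<bar>)"
proof (cases "\<nu> > 0")
  case True
  have "intensity_excess \<tau> \<mu> \<nu> \<le> ennreal (\<kappa>M / 2) * ennreal (\<bar>Iz \<tau> \<mu> \<nu>\<bar> + \<bar>I'z \<tau> \<mu> \<nu>\<bar>)"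
    unfolding intensity_excess_def using kappa[OF True] by (intro mult_mono ennreal_leI) auto
  thus ?thesis by (simp add: ennreal_plus)
qed (simp add: intensity_excess_def Iz_def I'z_def phase_space_def)

definition "total_intensity_excess =
  integral\<^sup>N lborel3 (\<lambda>x. intensity_excess (fst x) (fst (snd x)) (snd (snd x)))"
definition "total_emission_excess = (\<integral>\<^sup>+\<nu>. \<integral>\<^sup>+\<tau>. emission_excess \<nu> \<tau> \<partial>lborel \<partial>lborel)"
definition "total_transport_bound =
  (\<integral>\<^sup>+\<nu>. \<integral>\<^sup>+\<tau>. \<integral>\<^sup>+\<mu>. transport_bound \<tau> \<mu> \<nu> \<partial>lborel \<partial>lborel \<partial>lborel)"
definition "total_escape_loss = (\<integral>\<^sup>+\<nu>. \<integral>\<^sup>+\<tau>. escape_loss \<nu> \<tau> \<partial>lborel \<partial>lborel)"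

lemma total_intensity_excess_finite: "total_intensity_excess \<noteq> \<infinity>"
proof -
  let ?a = "\<lambda>x. ennreal \<bar>Iz (fst x) (fst (snd x)) (snd (snd x))\<bar>"
  let ?b = "\<lambda>x. ennreal \<bar>I'z (fst x) (fst (snd x)) (snd (snd x))\<bar>"
  have "total_intensity_excess \<le> integral\<^sup>N lborel3 (\<lambda>x. ennreal (\<kappa>M / 2) * (?a x + ?b x))"
    unfolding total_intensity_excess_def by (intro nn_integral_mono intensity_excess_bounded)
  also have "\<dots> = ennreal (\<kappa>M / 2) * (integral\<^sup>N lborel3 ?a + integral\<^sup>N lborel3 ?b)"
    by (subst nn_integral_cmult, measurable, subst nn_integral_add, measurable)
  also have "\<dots> < \<infinity>"
    using integrable_Iz unfolding integrable_iff_bounded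
    by (simp add: case_prod_beta' ennreal_mult_less_top)
  finally show ?thesis by simp
qed

lemma total_intensity_excess_iterated:
  "total_intensity_excess = (\<integral>\<^sup>+\<tau>. \<integral>\<^sup>+\<nu>. \<integral>\<^sup>+\<mu>. intensity_excess \<tau> \<mu> \<nu> \<partial>lborel \<partial>lborel \<partial>lborel)"
  unfolding total_intensity_excess_def by (subst nn_integral_lborel3) simp_all

lemma radiative_equilibrium_AE:
  "AE \<tau> in lborel. \<tau> \<in> {0<..<Z} \<longrightarrow>
     temp_eq hb c kB \<kappa> a I \<tau> (T \<tau>) \<and> temp_eq hb c kB \<kappa> a I' \<tau> (T' \<tau>)"
proof -
  have "AE \<tau> in lborel. \<tau> \<in> {0<..<Z} \<longrightarrow> temp_eq hb c kB \<kappa> a I \<tau> (T \<tau>)"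
       "AE \<tau> in lborel. \<tau> \<in> {0<..<Z} \<longrightarrow> temp_eq hb c kB \<kappa> a I' \<tau> (T' \<tau>)"
    using sol sol' unfolding rte_solution_def by auto
  thus ?thesis by eventually_elim auto
qed

lemma total_emission_le_intensity_excess: "total_emission_excess \<le> total_intensity_excess"
proof -
  have "total_emission_excess = (\<integral>\<^sup>+\<tau>. \<integral>\<^sup>+\<nu>. emission_excess \<nu> \<tau> \<partial>lborel \<partial>lborel)"
    unfolding total_emission_excess_def by (rule lborel_pair.Fubini') measurable
  also have "\<dots> \<le> (\<integral>\<^sup>+\<tau>. \<integral>\<^sup>+\<nu>. \<integral>\<^sup>+\<mu>. intensity_excess \<tau> \<mu> \<nu> \<partial>lborel \<partial>lborel \<partial>lborel)"
  proof (rule nn_integral_mono_AE)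
    show "AE \<tau> in lborel. (\<integral>\<^sup>+\<nu>. emission_excess \<nu> \<tau> \<partial>lborel)
        \<le> (\<integral>\<^sup>+\<nu>. \<integral>\<^sup>+\<mu>. intensity_excess \<tau> \<mu> \<nu> \<partial>lborel \<partial>lborel)"
      using radiative_equilibrium_AE integrable_slices_AE
    proof eventually_elim
      case (elim \<tau>)
      show ?case
      proof (cases "\<tau> \<in> {0<..<Z}")
        case True
        with elim show ?thesis by (intro emission_excess_le_intensity_excess) auto
      qed (simp add: emission_excess_def)
    qed
  qed
  finally show ?thesis by (simp add: total_intensity_excess_iterated)
qed

lemma total_intensity_excess_le_transport_bound: "total_intensity_excess \<le> total_transport_bound"
proof -
  have "total_intensity_excess
      \<le> integral\<^sup>N lborel3 (\<lambda>x. transport_bound (fst x) (fst (snd x)) (snd (snd x)))"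
    unfolding total_intensity_excess_def
    by (rule nn_integral_mono_AE[OF intensity_excess_le_transport_bound])
  also have "\<dots> = (\<integral>\<^sup>+\<tau>. \<integral>\<^sup>+\<nu>. \<integral>\<^sup>+\<mu>. transport_bound \<tau> \<mu> \<nu> \<partial>lborel \<partial>lborel \<partial>lborel)"
    by (subst nn_integral_lborel3) simp_all
  also have "\<dots> = total_transport_bound"
    unfolding total_transport_bound_def by (rule lborel_pair.Fubini'[symmetric]) measurable
  finally show ?thesis .
qed

lemma transport_escape_le_emission_at:
  "(\<integral>\<^sup>+\<tau>. \<integral>\<^sup>+\<mu>. transport_bound \<tau> \<mu> \<nu> \<partial>lborel \<partial>lborel) + (\<integral>\<^sup>+\<tau>. escape_loss \<nu> \<tau> \<partial>lborel)
   \<le> (\<integral>\<^sup>+\<tau>. emission_excess \<nu> \<tau> \<partial>lborel)"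
proof (cases "\<nu> > 0")
  case True
  have k: "\<kappa> \<nu> > 0" using kappa[OF True] by simp
  show ?thesis
    using transport_balance[OF k, of "src_excess \<nu>" Z] True
    by (simp add: transport_bound_def transported_excess_def escape_loss_def emission_excess_def mult.assoc)
qed (simp add: transport_bound_def escape_loss_def emission_excess_def)

lemma total_transport_escape_le_emission:
  "total_transport_bound + total_escape_loss \<le> total_emission_excess"
proof -
  have "total_transport_bound + total_escape_loss
      = (\<integral>\<^sup>+\<nu>. (\<integral>\<^sup>+\<tau>. \<integral>\<^sup>+\<mu>. transport_bound \<tau> \<mu> \<nu> \<partial>lborel \<partial>lborel)
               + (\<integral>\<^sup>+\<tau>. escape_loss \<nu> \<tau> \<partial>lborel) \<partial>lborel)"
    unfolding total_transport_bound_def total_escape_loss_def by (rule nn_integral_add[symmetric]) measurable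
  also have "\<dots> \<le> total_emission_excess"
    unfolding total_emission_excess_def by (intro nn_integral_mono transport_escape_le_emission_at)
  finally show ?thesis .
qed

lemma total_escape_loss_eq_0: "total_escape_loss = 0"
proof -
  have fin: "total_emission_excess \<noteq> \<infinity>"
    using total_emission_le_intensity_excess total_intensity_excess_finite by (auto simp: top_unique)
  have "total_emission_excess + total_escape_loss \<le> total_transport_bound + total_escape_loss"
    using total_emission_le_intensity_excess total_intensity_excess_le_transport_bound
    by (intro add_right_mono) (rule order_trans)
  also have "\<dots> \<le> total_emission_excess + 0"
    using total_transport_escape_le_emission by simp
  finally show ?thesis using fin by (simp add: ennreal_add_left_cancel_le)
qed

lemma transport_bound_vanishes:
  assumes \<nu>: "\<nu> > 0" and no_escape: "AE \<tau> in lborel. escape_loss \<nu> \<tau> = 0"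
  shows "transport_bound \<tau> \<mu> \<nu> = 0"
proof (cases "\<tau> \<in> {0<..<Z}")
  case True
  have k: "\<kappa> \<nu> > 0" using kappa[OF \<nu>] by simp
  have "AE t in lborel. transport_kernel Z (\<kappa> \<nu>) \<tau> \<mu> t * src_excess \<nu> t = 0"
    using no_escape
  proof eventually_elim
    case (elim t)
    thus ?case using escape_rate_pos[OF k, of t Z] \<nu> True
      by (cases "t \<in> {0<..<Z}") (auto simp: escape_loss_def transport_kernel_def)
  qed
  hence "transported_excess \<tau> \<mu> \<nu> = 0"
    unfolding transported_excess_def by (subst nn_integral_0_iff_AE) measurable
  thus ?thesis by (simp add: transport_bound_def)
qed (simp add: transport_bound_def)

lemma total_intensity_excess_eq_0: "total_intensity_excess = 0"
proof -
  have "AE \<nu> in lborel. (\<integral>\<^sup>+\<tau>. escape_loss \<nu> \<tau> \<partial>lborel) = 0"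
    using total_escape_loss_eq_0 unfolding total_escape_loss_def
    by (subst (asm) nn_integral_0_iff_AE) measurable
  hence "AE \<nu> in lborel. (\<integral>\<^sup>+\<tau>. \<integral>\<^sup>+\<mu>. transport_bound \<tau> \<mu> \<nu> \<partial>lborel \<partial>lborel) = 0"
  proof eventually_elim
    case (elim \<nu>)
    show ?case
    proof (cases "\<nu> > 0")
      case True
      have "AE \<tau> in lborel. escape_loss \<nu> \<tau> = 0"
        using elim by (subst (asm) nn_integral_0_iff_AE) measurable
      thus ?thesis using transport_bound_vanishes[OF True] by simp
    qed (simp add: transport_bound_def)
  qed
  hence "total_transport_bound = 0"
    unfolding total_transport_bound_def by (simp add: nn_integral_0_iff_AE)
  thus ?thesis using total_intensity_excess_le_transport_bound by simp
qed

lemma comparison: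
  "AE x in lborel3. x \<in> phase_space Z \<longrightarrow>
     I (fst x) (fst (snd x)) (snd (snd x)) \<le> I' (fst x) (fst (snd x)) (snd (snd x)) \<and> T (fst x) \<le> T' (fst x)"
proof -
  have no_excess: "AE x in lborel3. intensity_excess (fst x) (fst (snd x)) (snd (snd x)) = 0"
    using total_intensity_excess_eq_0 unfolding total_intensity_excess_def
    by (subst (asm) nn_integral_0_iff_AE) measurable
  have "AE \<tau> in lborel. (\<integral>\<^sup>+\<nu>. \<integral>\<^sup>+\<mu>. intensity_excess \<tau> \<mu> \<nu> \<partial>lborel \<partial>lborel) = 0"
    using total_intensity_excess_eq_0 unfolding total_intensity_excess_iterated
    by (subst (asm) nn_integral_0_iff_AE) measurable
  with radiative_equilibrium_AE integrable_slices_AE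
  have "AE \<tau> in lborel. \<tau> \<in> {0<..<Z} \<longrightarrow> T \<tau> \<le> T' \<tau>"
    by eventually_elim (auto intro: temperature_le_of_no_intensity_excess)
  hence "AE x in lborel3. fst x \<in> {0<..<Z} \<longrightarrow> T (fst x) \<le> T' (fst x)"
    by (rule AE_pair_fstI[OF sigma_finite_lborel2])
  with no_excess show ?thesis
  proof eventually_elim
    case (elim x)
    obtain \<tau> \<mu> \<nu> where x: "x = (\<tau>, \<mu>, \<nu>)" by (cases x) auto
    show ?case
      using elim kappa[of \<nu>] unfolding x
      by (auto simp: intensity_excess_def Iz_def I'z_def phase_space_def ennreal_eq_0_iff)
  qed
qed

end


theorem mainTheorem5:
  fixes hb c kB Z \<kappa>M :: real
    and \<kappa> a :: "real \<Rightarrow> real"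
    and Qp Qm Rp Rm :: "real \<Rightarrow> real \<Rightarrow> real"
    and I I' :: "real \<Rightarrow> real \<Rightarrow> real \<Rightarrow> real"
    and T T' :: "real \<Rightarrow> real"
  assumes phys: "hb > 0" "c > 0" "kB > 0"
    and Z: "Z > 0"
    and meas: "\<kappa> \<in> borel_measurable borel" "a \<in> borel_measurable borel"
    and kappa: "\<And>\<nu>. \<nu> > 0 \<Longrightarrow> 0 < \<kappa> \<nu> \<and> \<kappa> \<nu> \<le> \<kappa>M"
    and alb: "\<And>\<nu>. \<nu> > 0 \<Longrightarrow> 0 \<le> a \<nu> \<and> a \<nu> < 1"
    and L1: "set_integrable (lborel \<Otimes>\<^sub>M lborel) ({0<..<1} \<times> {0<..}) (\<lambda>(\<mu>, \<nu>). Qp \<mu> \<nu>)"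
            "set_integrable (lborel \<Otimes>\<^sub>M lborel) ({0<..<1} \<times> {0<..}) (\<lambda>(\<mu>, \<nu>). Qm \<mu> \<nu>)"
            "set_integrable (lborel \<Otimes>\<^sub>M lborel) ({0<..<1} \<times> {0<..}) (\<lambda>(\<mu>, \<nu>). Rp \<mu> \<nu>)"
            "set_integrable (lborel \<Otimes>\<^sub>M lborel) ({0<..<1} \<times> {0<..}) (\<lambda>(\<mu>, \<nu>). Rm \<mu> \<nu>)"
    and QR: "AE x in lborel \<Otimes>\<^sub>M lborel. x \<in> {0<..<1} \<times> {0<..} \<longrightarrow>
               0 \<le> Qp (fst x) (snd x) \<and> Qp (fst x) (snd x) \<le> Rp (fst x) (snd x) \<and>
               0 \<le> Qm (fst x) (snd x) \<and> Qm (fst x) (snd x) \<le> Rm (fst x) (snd x)"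
    and sol: "rte_solution hb c kB Z \<kappa> a Qp Qm I T"
    and sol': "rte_solution hb c kB Z \<kappa> a Rp Rm I' T'"
  shows "(AE x in lborel \<Otimes>\<^sub>M (lborel \<Otimes>\<^sub>M lborel).
            x \<in> {0<..<Z} \<times> ({-1<..<1} \<times> {0<..}) \<longrightarrow>
              I (fst x) (fst (snd x)) (snd (snd x)) \<le> I' (fst x) (fst (snd x)) (snd (snd x))
              \<and> T (fst x) \<le> T' (fst x))
       \<and> ((AE x in lborel \<Otimes>\<^sub>M lborel. x \<in> {0<..<1} \<times> {0<..} \<longrightarrow>
              Qp (fst x) (snd x) = Rp (fst x) (snd x) \<and> Qm (fst x) (snd x) = Rm (fst x) (snd x))
          \<longrightarrow> (AE x in lborel \<Otimes>\<^sub>M (lborel \<Otimes>\<^sub>M lborel).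
                x \<in> {0<..<Z} \<times> ({-1<..<1} \<times> {0<..}) \<longrightarrow>
                  I (fst x) (fst (snd x)) (snd (snd x)) = I' (fst x) (fst (snd x)) (snd (snd x))
                  \<and> T (fst x) = T' (fst x)))"
proof -
  have ordered: "AE x in lborel2. x \<in> {0<..<1} \<times> {0<..} \<longrightarrow>
      Qp (fst x) (snd x) \<le> Rp (fst x) (snd x) \<and> Qm (fst x) (snd x) \<le> Rm (fst x) (snd x)"
    using QR by (rule eventually_mono) blast
  interpret QR: ordered_rte_solutions hb c kB Z \<kappa>M \<kappa> a Qp Qm Rp Rm I I' T T'
    using phys meas kappa alb ordered sol sol' by unfold_locales auto
  show ?thesis
  proof (intro conjI impI)
    show le: "AE x in lborel3. x \<in> {0<..<Z} \<times> ({-1<..<1} \<times> {0<..}) \<longrightarrow>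
        I (fst x) (fst (snd x)) (snd (snd x)) \<le> I' (fst x) (fst (snd x)) (snd (snd x)) \<and> T (fst x) \<le> T' (fst x)"
      using QR.comparison unfolding phase_space_def .
    assume "AE x in lborel2. x \<in> {0<..<1} \<times> {0<..} \<longrightarrow>
      Qp (fst x) (snd x) = Rp (fst x) (snd x) \<and> Qm (fst x) (snd x) = Rm (fst x) (snd x)"
    hence "AE x in lborel2. x \<in> {0<..<1} \<times> {0<..} \<longrightarrow>
        Rp (fst x) (snd x) \<le> Qp (fst x) (snd x) \<and> Rm (fst x) (snd x) \<le> Qm (fst x) (snd x)"
      by (rule eventually_mono) auto
    then interpret RQ: ordered_rte_solutions hb c kB Z \<kappa>M \<kappa> a Rp Rm Qp Qm I' I T' T
      using phys meas kappa alb sol sol' by unfold_locales auto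
    show "AE x in lborel3. x \<in> {0<..<Z} \<times> ({-1<..<1} \<times> {0<..}) \<longrightarrow>
        I (fst x) (fst (snd x)) (snd (snd x)) = I' (fst x) (fst (snd x)) (snd (snd x)) \<and> T (fst x) = T' (fst x)"
      using le RQ.comparison unfolding phase_space_def by eventually_elim auto
  qed
qed

end
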